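(* There exists a seaweed Lie algebra in the simple Lie algebra of type $E_8$ which does not admit a Richardson element. Concretely, with simple roots $\alpha_1,\dots,\alpha_8$ numbered as in Tauvel–Yu (Lie algebras and algebraic groups, Chapter 18), the seaweed Lie algebra $\mathfrak q_{S,T}=\mathfrak p^-_S\cap\mathfrak p^+_T$ with $S=\Pi\setminus\{\alpha_8\}$ and $T=\Pi\setminus\{\alpha_4,\alpha_5\}$ (of dimension 81, with $\dim\mathfrak n^+_{S,T}=56$, $\dim\mathfrak n^-_{S,T}=3$) has no element $x\in\mathfrak n_{S,T}$ with $[x,\mathfrak q_{S,T}]=\mathfrak n_{S,T}$.
   Context: $\mathfrak g$ is a simple Lie algebra over an algebraically closed field of characteristic zero with Cartan subalgebra $\mathfrak h$ inside a Borel subalgebra $\mathfrak b$; $R$, $R^+$, $R^-$, $\Pi$ are the roots, positive roots, negative roots and simple roots, $\mathfrak g_\alpha$ the root spaces. For $S\subseteq\Pi$: $R_S=\mathbb ZS\cap R$, $R_S^\pm=R^\pm\cap R_S$, $\mathfrak p_S^\pm=\mathfrak h\oplus\bigoplus_{\alpha\in R_S\cup R^\pm}\mathfrak g_\alpha$. For $S,T\subseteq\Pi$, $\mathfrak q_{S,T}=\mathfrak p^-_S\cap\mathfrak p^+_T$; $R^+_{S,T}=R^+_S\setminus R_{S\cap T}$, $R^-_{S,T}=R^-_T\setminus R_{S\cap T}$, $\mathfrak n^\pm_{S,T}=\bigoplus_{\alpha\in R^\pm_{S,T}}\mathfrak g_\alpha$, and $\mathfrak n_{S,T}=\mathfrak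 n^+_{S,T}\oplus\mathfrak n^-_{S,T}$ is the nilpotent radical of $\mathfrak q_{S,T}$. A seaweed Lie algebra is an intersection $\mathfrak p\cap\mathfrak p'$ of two parabolic subalgebras with $\mathfrak p+\mathfrak p'=\mathfrak g$ (the $\mathfrak q_{S,T}$ are examples). A Richardson element of $\mathfrak q_{S,T}$ is $x\in\mathfrak n_{S,T}$ with $[x,\mathfrak q_{S,T}]=\mathfrak n_{S,T}$ (equivalently, the orbit of $x$ under $\mathbf Q_{S,T}=\mathbf P^-_S\cap\mathbf P^+_T$ is dense in $\mathfrak n_{S,T}$). *)

theory Defs
  imports "HOL-Computational_Algebra.Polynomial"
begin

section \<open>The root system of type E8 (Bourbaki / Tauvel--Yu numbering, 0-based)\<close>

text \<open>Simple roots alpha_1..alpha_8 are indexed 0..7.  Dynkin diagram edges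
  (1-based): 1-3, 3-4, 2-4, 4-5, 5-6, 6-7, 7-8.\<close>

definition e8_edges :: "(nat \<times> nat) set" where
  "e8_edges = {(0,2),(2,3),(1,3),(3,4),(4,5),(5,6),(6,7)}"

definition cartan :: "nat \<Rightarrow> nat \<Rightarrow> int" where
  "cartan i j = (if i = j then 2 else if (i,j) \<in> e8_edges \<or> (j,i) \<in> e8_edges then -1 else 0)"

text \<open>Elements of the root lattice: integer coordinate vectors w.r.t. the simple roots.\<close>
definition rform :: "int list \<Rightarrow> int list \<Rightarrow> int" where
  "rform a b = (\<Sum>i<8. \<Sum>j<8. a!i * cartan i j * b!j)"

text \<open>For the simply laced type E8, the roots are exactly the lattice vectors of norm 2.\<close>
definition roots :: "int list set" where
  "roots = {a. length a = 8 \<and> rform a a = 2}"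

definition radd :: "int list \<Rightarrow> int list \<Rightarrow> int list" where
  "radd a b = map2 (+) a b"

definition rneg :: "int list \<Rightarrow> int list" where
  "rneg a = map uminus a"

definition posroots :: "int list set" where
  "posroots = {a \<in> roots. \<forall>i<8. a!i \<ge> 0}"

definition negroots :: "int list set" where
  "negroots = {a \<in> roots. \<forall>i<8. a!i \<le> 0}"

text \<open>R_S = Z S \<inter> R, for S a set of simple-root indices.\<close>
definition rootsub :: "nat set \<Rightarrow> int list set" where
  "rootsub S = {a \<in> roots. \<forall>i<8. i \<notin> S \<longrightarrow> a!i = 0}"

section \<open>The Lie algebra of type E8 (Kac's construction, Infinite-dim. Lie algebras 7.8)\<close>

text \<open>Sign cocycle: bimultiplicative, eps(a_i,a_j) = -1 iff i = j or (i < j and adjacent).\<close>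
definition eps :: "int list \<Rightarrow> int list \<Rightarrow> int" where
  "eps a b = (-1) ^ nat ((\<Sum>i<8. \<Sum>j<8.
      (if i = j \<or> (i < j \<and> cartan i j = -1) then a!i * b!j else 0)) mod 2)"

datatype idx = Hc nat | Er "int list"

text \<open>Basis: Hc i (i<8) is the coroot h_i = alpha_i of the Cartan subalgebra,
  Er a (a a root) is the root vector E_a.\<close>
definition basis :: "idx set" where
  "basis = Hc ` {..<8} \<union> Er ` roots"

definition gE8 :: "(idx \<Rightarrow> 'k::field) set" where
  "gE8 = {x. \<forall>c. c \<notin> basis \<longrightarrow> x c = 0}"

definition pair :: "nat \<Rightarrow> int list \<Rightarrow> int" where
  "pair i b = (\<Sum>j<8. cartan i j * b!j)"

text \<open>Structure constants: coefficient of c in [a, b] for basis vectors a, b.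
  [h,h'] = 0, [h,E_b] = (h|b) E_b, [E_a,E_-a] = -a, [E_a,E_b] = eps(a,b) E_(a+b)
  if a+b is a root, and 0 otherwise.\<close>
fun bb :: "idx \<Rightarrow> idx \<Rightarrow> idx \<Rightarrow> 'k::field" where
  "bb (Hc i) (Hc j) c = 0"
| "bb (Hc i) (Er b) c = (if c = Er b then of_int (pair i b) else 0)"
| "bb (Er a) (Hc j) c = (if c = Er a then - of_int (pair j a) else 0)"
| "bb (Er a) (Er b) c =
     (if b = rneg a then (case c of Hc i \<Rightarrow> (if i < 8 then - of_int (a!i) else 0) | Er _ \<Rightarrow> 0)
      else if radd a b \<in> roots then (if c = Er (radd a b) then of_int (eps a b) else 0)
      else 0)"

definition lbr :: "(idx \<Rightarrow> 'k::field) \<Rightarrow> (idx \<Rightarrow> 'k) \<Rightarrow> (idx \<Rightarrow> 'k)" where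
  "lbr x y = (\<lambda>c. \<Sum>a\<in>basis. \<Sum>b\<in>basis. x a * y b * bb a b c)"

section \<open>Parabolic and seaweed subalgebras\<close>

text \<open>h \<oplus> (sum of g_a, a \<in> A)\<close>
definition hspan :: "int list set \<Rightarrow> (idx \<Rightarrow> 'k::field) set" where
  "hspan A = {x \<in> gE8. \<forall>a \<in> roots. a \<notin> A \<longrightarrow> x (Er a) = 0}"

text \<open>sum of g_a, a \<in> A\<close>
definition rspan :: "int list set \<Rightarrow> (idx \<Rightarrow> 'k::field) set" where
  "rspan A = {x \<in> hspan A. \<forall>i<8. x (Hc i) = 0}"

definition pminus :: "nat set \<Rightarrow> (idx \<Rightarrow> 'k::field) set" where
  "pminus S = hspan (rootsub S \<union> negroots)"

definition pplus :: "nat set \<Rightarrow> (idx \<Rightarrow> 'k::field) set" where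
  "pplus T = hspan (rootsub T \<union> posroots)"

definition qST :: "nat set \<Rightarrow> nat set \<Rightarrow> (idx \<Rightarrow> 'k::field) set" where
  "qST S T = pminus S \<inter> pplus T"

definition RplusST :: "nat set \<Rightarrow> nat set \<Rightarrow> int list set" where
  "RplusST S T = (rootsub S \<inter> posroots) - rootsub (S \<inter> T)"

definition RminusST :: "nat set \<Rightarrow> nat set \<Rightarrow> int list set" where
  "RminusST S T = (rootsub T \<inter> negroots) - rootsub (S \<inter> T)"

definition nST :: "nat set \<Rightarrow> nat set \<Rightarrow> (idx \<Rightarrow> 'k::field) set" where
  "nST S T = rspan (RplusST S T \<union> RminusST S T)"

definition richardson :: "nat set \<Rightarrow> nat set \<Rightarrow> (idx \<Rightarrow> 'k::field) \<Rightarrow> bool" where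
  "richardson S T x \<longleftrightarrow> x \<in> nST S T \<and> lbr x ` qST S T = nST S T"

text \<open>The specific S = Pi - {alpha_8}, T = Pi - {alpha_4, alpha_5} (0-based indices).\<close>
definition S8 :: "nat set" where "S8 = {..<8} - {7}"
definition T8 :: "nat set" where "T8 = {..<8} - {3,4}"

end

theory Submission
  imports Defs "HOL-Analysis.Cartesian_Space"
begin

(* Dimensions: 60 times the norm of a lattice vector is a positive sum of squares, which confines
   every coordinate of a root to a small window; this enumerates the 240 roots, and the roots of q
   and of its nilradical n are then counted.

   No Richardson element: for x in n, the coordinates of [x, z] at the 30 roots of n whose
   coefficients at alpha_4 and alpha_5 are at most one (the local targets) depend only on 31
   coordinates of z (the Cartan part, the Levi roots of q, the degree-one roots of n).  If ad x maps
   q onto n, this map from 31 to 30 coordinates is onto, so its kernel is a line.  The degree-one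
   part of x and a "Levi witness" built from a common zero of two linear forms attached to x are
   two independent kernel vectors, which is absurd by a general lemma on maps onto a hyperplane.  When x vanishes at alpha_5, alpha_5+alpha_6, alpha_5+alpha_6+alpha_7, already
   E_{alpha_5} is not of the form [x, y]. *)


section \<open>Two facts from linear algebra\<close>

text \<open>A linear endomorphism of a finite-dimensional coordinate space whose image contains the
  hyperplane of vectors vanishing at position jo has at most a one-dimensional kernel: a kernel
  vector vanishing at a position ji where another kernel vector does not vanish is zero.  (Extend
  F by the coordinate ji into position jo; the result is onto, hence injective.)\<close>

lemma kernel_of_map_onto_hyperplane:
  fixes F :: "'a::field^'n \<Rightarrow> 'a^'n" and jo ji :: 'n
  assumes lin: "Vector_Spaces.linear (*s) (*s) F"
    and onto: "\<And>t. t $ jo = 0 \<Longrightarrow> t \<in> range F"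
    and w: "F w = 0" "w $ ji \<noteq> 0"
    and u: "F u = 0" "u $ ji = 0"
  shows "u = 0"
proof -
  define G where "G v = F v + (v $ ji) *s axis jo 1" for v
  have lin_G: "Vector_Spaces.linear (*s) (*s) G"
    unfolding Vector_Spaces.linear_iff
  proof (intro conjI allI)
    fix v v' :: "'a^'n" and c :: 'a
    show "G (v + v') = G v + G v'"
      unfolding G_def vec.linear_add[OF lin] by (simp add: vector_sadd_rdistrib)
    show "G (c *s v) = c *s G v"
      unfolding G_def vec.linear_scale[OF lin] by (simp add: vector_add_ldistrib)
  qed (rule vec.vector_space_axioms)+
  have "t \<in> range G" for t
  proof -
    obtain v0 where v0: "F v0 = t - (t $ jo) *s axis jo 1"
      using onto[of "t - (t $ jo) *s axis jo 1"] by auto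
    define s where "s = (t $ jo - v0 $ ji) / w $ ji"
    have "G (v0 + s *s w) = t"
      using w unfolding G_def s_def vec.linear_add[OF lin] vec.linear_scale[OF lin] v0
      by (simp add: vec_eq_iff axis_def field_simps)
    then show ?thesis
      by (metis rangeI)
  qed
  then have "inj G"
    using vec.linear_surj_imp_inj[OF lin_G] by blast
  moreover have "G u = G 0"
    unfolding G_def using u vec.linear_0[OF lin] by simp
  ultimately show ?thesis
    by (rule injD)
qed

lemma common_annihilator:
  fixes w1 w2 w3 m1 m2 m3 :: "'k::field"
  shows "\<exists>c1 c2 c3. \<not> (c1 = 0 \<and> c2 = 0 \<and> c3 = 0)
    \<and> c1*w1 + c2*w2 + c3*w3 = 0 \<and> c1*m1 + c2*m2 + c3*m3 = 0"
proof (cases "w2*m3 - w3*m2 = 0 \<and> w3*m1 - w1*m3 = 0 \<and> w1*m2 - w2*m1 = 0")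
  case False
  then show ?thesis
    by (intro exI[of _ "w2*m3 - w3*m2"] exI[of _ "w3*m1 - w1*m3"] exI[of _ "w1*m2 - w2*m1"])
      (simp add: algebra_simps)
next
  case True
  then have p: "w2*m3 = w3*m2" "w3*m1 = w1*m3" "w1*m2 = w2*m1"
    by simp_all
  consider "w1 \<noteq> 0" | "w1 = 0" "w2 \<noteq> 0" | "w1 = 0" "w2 = 0"
    by blast
  then show ?thesis
  proof cases
    case 1
    then show ?thesis
      using p by (intro exI[of _ "-w3"] exI[of _ 0] exI[of _ w1]) (simp add: algebra_simps)
  next
    case 2
    then show ?thesis
      using p by (intro exI[of _ w2] exI[of _ "-w1"] exI[of _ 0]) (simp add: algebra_simps)
  next
    case 3
    show ?thesis
    proof (cases "m1 = 0")
      case True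
      then show ?thesis
        using 3 by (intro exI[of _ 1] exI[of _ 0] exI[of _ 0]) simp
    next
      case False
      then show ?thesis
        using 3 by (intro exI[of _ m2] exI[of _ "-m1"] exI[of _ 0]) (simp add: algebra_simps)
    qed
  qed
qed

section \<open>The roots of E8\<close>

text \<open>60 (a|a) as a sum of squares with positive weights (completing squares along the Dynkin
  diagram, starting from alpha_4).\<close>

definition norm60 :: "int list \<Rightarrow> int" where
  "norm60 a = 2*(a!3)^2 + 10*(3*(a!2)-2*(a!3))^2 + 30*(2*(a!1)-(a!3))^2 + 30*(2*(a!0)-(a!2))^2
     + 3*(5*(a!4)-4*(a!3))^2 + 5*(4*(a!5)-3*(a!4))^2 + 10*(3*(a!6)-2*(a!5))^2
     + 30*(2*(a!7)-(a!6))^2"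

lemma list8_eq: "length a = 8 \<Longrightarrow> a = [a!0, a!1, a!2, a!3, a!4, a!5, a!6, a!7]"
  by (simp add: list_eq_iff_nth_eq numeral_eq_Suc less_Suc_eq)

lemma rform_eq_norm60:
  assumes "length a = 8"
  shows "60 * rform a a = norm60 a"
proof -
  obtain a0 a1 a2 a3 a4 a5 a6 a7 where a: "a = [a0, a1, a2, a3, a4, a5, a6, a7]"
    using list8_eq[OF assms] by blast
  show ?thesis
    unfolding a rform_def norm60_def cartan_def e8_edges_def
    by (simp add: numeral_eq_Suc lessThan_Suc algebra_simps power2_eq_square)
qed

lemma roots_iff_norm60: "a \<in> roots \<longleftrightarrow> length a = 8 \<and> norm60 a = 120"
  using rform_eq_norm60[of a] by (auto simp: roots_def)

lemma abs_le_if_square_less: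
  fixes t m :: int
  assumes "t^2 < (m + 1)^2" and "0 \<le> m"
  shows "\<bar>t\<bar> \<le> m"
proof (rule ccontr)
  assume "\<not> \<bar>t\<bar> \<le> m"
  then have "(m + 1)^2 \<le> \<bar>t\<bar>^2"
    using assms(2) by (intro power_mono) auto
  then show False
    using assms(1) by simp
qed

text \<open>The integers t with |d t - c| <= m, for d > 0.\<close>

definition window :: "int \<Rightarrow> int \<Rightarrow> int \<Rightarrow> int list" where
  "window d c m = [(c - m + d - 1) div d .. (c + m) div d]"

lemma mem_window:
  fixes d c m t :: int
  assumes "0 < d" and "\<bar>d * t - c\<bar> \<le> m"
  shows "t \<in> set (window d c m)"
proof -
  let ?n = "c - m + d - 1"
  have "d * (?n div d) + ?n mod d = ?n"
    by (rule mult_div_mod_eq)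
  moreover have "0 \<le> ?n mod d"
    using assms(1) by simp
  ultimately have "d * (?n div d) \<le> ?n"
    by linarith
  also have "\<dots> < d * (t + 1)"
    using assms(2) by (simp add: algebra_simps)
  finally have lower: "?n div d \<le> t"
    using assms(1) by (simp add: mult_less_cancel_left_pos)
  have "(d * t) div d \<le> (c + m) div d"
    using assms by (intro zdiv_mono1) auto
  then have upper: "t \<le> (c + m) div d"
    using assms(1) by simp
  show ?thesis
    unfolding window_def using lower upper by simp
qed

text \<open>Coordinates are chosen one at a time inside windows dictated by the squares of norm60, pruning
  as soon as the partial sum exceeds 120; the candidates of norm 120 are kept.\<close>

definition root_candidates :: "int list list" where
  "root_candidates = [[a0,a1,a2,a3,a4,a5,a6,a7]. a3 \<leftarrow> [-7..7],
    a2 \<leftarrow> window 3 (2*a3) 3, 2*a3^2 + 10*(3*a2-2*a3)^2 \<le> 120,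
    a1 \<leftarrow> window 2 a3 2, 2*a3^2 + 10*(3*a2-2*a3)^2 + 30*(2*a1-a3)^2 \<le> 120,
    a0 \<leftarrow> window 2 a2 2, 2*a3^2 + 10*(3*a2-2*a3)^2 + 30*(2*a1-a3)^2 + 30*(2*a0-a2)^2 \<le> 120,
    a4 \<leftarrow> window 5 (4*a3) 6, 2*a3^2 + 10*(3*a2-2*a3)^2 + 30*(2*a1-a3)^2 + 30*(2*a0-a2)^2
      + 3*(5*a4-4*a3)^2 \<le> 120,
    a5 \<leftarrow> window 4 (3*a4) 4, 2*a3^2 + 10*(3*a2-2*a3)^2 + 30*(2*a1-a3)^2 + 30*(2*a0-a2)^2
      + 3*(5*a4-4*a3)^2 + 5*(4*a5-3*a4)^2 \<le> 120,
    a6 \<leftarrow> window 3 (2*a5) 3, 2*a3^2 + 10*(3*a2-2*a3)^2 + 30*(2*a1-a3)^2 + 30*(2*a0-a2)^2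
      + 3*(5*a4-4*a3)^2 + 5*(4*a5-3*a4)^2 + 10*(3*a6-2*a5)^2 \<le> 120,
    a7 \<leftarrow> window 2 a6 2, 2*a3^2 + 10*(3*a2-2*a3)^2 + 30*(2*a1-a3)^2 + 30*(2*a0-a2)^2
      + 3*(5*a4-4*a3)^2 + 5*(4*a5-3*a4)^2 + 10*(3*a6-2*a5)^2 + 30*(2*a7-a6)^2 = 120]"

text \<open>The 240 roots, in the order produced by the enumeration.\<close>

definition root_list :: "int list list" where
  "root_list = [
    [-2,-3,-4,-6,-5,-4,-3,-2], [-2,-3,-4,-6,-5,-4,-3,-1], [-2,-3,-4,-6,-5,-4,-2,-1], [-2,-3,-4,-6,-5,-3,-2,-1],
    [-2,-3,-4,-6,-4,-3,-2,-1], [-2,-3,-4,-5,-4,-3,-2,-1], [-2,-2,-4,-5,-4,-3,-2,-1], [-2,-3,-3,-5,-4,-3,-2,-1],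
    [-1,-3,-3,-5,-4,-3,-2,-1], [-2,-2,-3,-5,-4,-3,-2,-1], [-1,-2,-3,-5,-4,-3,-2,-1], [-2,-2,-3,-4,-4,-3,-2,-1],
    [-2,-2,-3,-4,-3,-3,-2,-1], [-2,-2,-3,-4,-3,-2,-2,-1], [-2,-2,-3,-4,-3,-2,-1,-1], [-2,-2,-3,-4,-3,-2,-1,0],
    [-1,-2,-3,-4,-4,-3,-2,-1], [-1,-2,-3,-4,-3,-3,-2,-1], [-1,-2,-3,-4,-3,-2,-2,-1], [-1,-2,-3,-4,-3,-2,-1,-1],
    [-1,-2,-3,-4,-3,-2,-1,0], [-1,-2,-2,-4,-4,-3,-2,-1], [-1,-2,-2,-4,-3,-3,-2,-1], [-1,-2,-2,-4,-3,-2,-2,-1],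
    [-1,-2,-2,-4,-3,-2,-1,-1], [-1,-2,-2,-4,-3,-2,-1,0], [-1,-2,-2,-3,-3,-3,-2,-1], [-1,-2,-2,-3,-3,-2,-2,-1],
    [-1,-2,-2,-3,-3,-2,-1,-1], [-1,-2,-2,-3,-3,-2,-1,0], [-1,-2,-2,-3,-2,-2,-2,-1], [-1,-2,-2,-3,-2,-2,-1,-1],
    [-1,-2,-2,-3,-2,-2,-1,0], [-1,-2,-2,-3,-2,-1,-1,-1], [-1,-2,-2,-3,-2,-1,-1,0], [-1,-2,-2,-3,-2,-1,0,0],
    [-1,-1,-2,-3,-3,-3,-2,-1], [-1,-1,-2,-3,-3,-2,-2,-1], [-1,-1,-2,-3,-3,-2,-1,-1], [-1,-1,-2,-3,-3,-2,-1,0],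
    [-1,-1,-2,-3,-2,-2,-2,-1], [-1,-1,-2,-3,-2,-2,-1,-1], [-1,-1,-2,-3,-2,-2,-1,0], [-1,-1,-2,-3,-2,-1,-1,-1],
    [-1,-1,-2,-3,-2,-1,-1,0], [-1,-1,-2,-3,-2,-1,0,0], [-1,-1,-2,-2,-2,-2,-2,-1], [-1,-1,-2,-2,-2,-2,-1,-1],
    [-1,-1,-2,-2,-2,-2,-1,0], [-1,-1,-2,-2,-2,-1,-1,-1], [-1,-1,-2,-2,-2,-1,-1,0], [-1,-1,-2,-2,-2,-1,0,0],
    [-1,-1,-2,-2,-1,-1,-1,-1], [-1,-1,-2,-2,-1,-1,-1,0], [-1,-1,-2,-2,-1,-1,0,0], [-1,-1,-2,-2,-1,0,0,0],
    [-1,-1,-1,-2,-2,-2,-2,-1], [-1,-1,-1,-2,-2,-2,-1,-1], [-1,-1,-1,-2,-2,-2,-1,0], [-1,-1,-1,-2,-2,-1,-1,-1],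
    [-1,-1,-1,-2,-2,-1,-1,0], [-1,-1,-1,-2,-2,-1,0,0], [-1,-1,-1,-2,-1,-1,-1,-1], [-1,-1,-1,-2,-1,-1,-1,0],
    [-1,-1,-1,-2,-1,-1,0,0], [-1,-1,-1,-2,-1,0,0,0], [0,-1,-1,-2,-2,-2,-2,-1], [0,-1,-1,-2,-2,-2,-1,-1],
    [0,-1,-1,-2,-2,-2,-1,0], [0,-1,-1,-2,-2,-1,-1,-1], [0,-1,-1,-2,-2,-1,-1,0], [0,-1,-1,-2,-2,-1,0,0],
    [0,-1,-1,-2,-1,-1,-1,-1], [0,-1,-1,-2,-1,-1,-1,0], [0,-1,-1,-2,-1,-1,0,0], [0,-1,-1,-2,-1,0,0,0],
    [-1,-1,-1,-1,-1,-1,-1,-1], [-1,-1,-1,-1,-1,-1,-1,0], [-1,-1,-1,-1,-1,-1,0,0], [-1,-1,-1,-1,-1,0,0,0],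
    [-1,-1,-1,-1,0,0,0,0], [0,-1,-1,-1,-1,-1,-1,-1], [0,-1,-1,-1,-1,-1,-1,0], [0,-1,-1,-1,-1,-1,0,0],
    [0,-1,-1,-1,-1,0,0,0], [0,-1,-1,-1,0,0,0,0], [-1,0,-1,-1,-1,-1,-1,-1], [-1,0,-1,-1,-1,-1,-1,0],
    [-1,0,-1,-1,-1,-1,0,0], [-1,0,-1,-1,-1,0,0,0], [-1,0,-1,-1,0,0,0,0], [0,0,-1,-1,-1,-1,-1,-1],
    [0,0,-1,-1,-1,-1,-1,0], [0,0,-1,-1,-1,-1,0,0], [0,0,-1,-1,-1,0,0,0], [0,0,-1,-1,0,0,0,0],
    [0,-1,0,-1,-1,-1,-1,-1], [0,-1,0,-1,-1,-1,-1,0], [0,-1,0,-1,-1,-1,0,0], [0,-1,0,-1,-1,0,0,0],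
    [0,-1,0,-1,0,0,0,0], [0,0,0,-1,-1,-1,-1,-1], [0,0,0,-1,-1,-1,-1,0], [0,0,0,-1,-1,-1,0,0],
    [0,0,0,-1,-1,0,0,0], [0,0,0,-1,0,0,0,0], [-1,0,-1,0,0,0,0,0], [0,0,-1,0,0,0,0,0],
    [0,-1,0,0,0,0,0,0], [-1,0,0,0,0,0,0,0], [0,0,0,0,-1,-1,-1,-1], [0,0,0,0,-1,-1,-1,0],
    [0,0,0,0,-1,-1,0,0], [0,0,0,0,-1,0,0,0], [0,0,0,0,0,-1,-1,-1], [0,0,0,0,0,-1,-1,0],
    [0,0,0,0,0,-1,0,0], [0,0,0,0,0,0,-1,-1], [0,0,0,0,0,0,-1,0], [0,0,0,0,0,0,0,-1],
    [0,0,0,0,0,0,0,1], [0,0,0,0,0,0,1,0], [0,0,0,0,0,0,1,1], [0,0,0,0,0,1,0,0],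
    [0,0,0,0,0,1,1,0], [0,0,0,0,0,1,1,1], [0,0,0,0,1,0,0,0], [0,0,0,0,1,1,0,0],
    [0,0,0,0,1,1,1,0], [0,0,0,0,1,1,1,1], [1,0,0,0,0,0,0,0], [0,1,0,0,0,0,0,0],
    [0,0,1,0,0,0,0,0], [1,0,1,0,0,0,0,0], [0,0,0,1,0,0,0,0], [0,0,0,1,1,0,0,0],
    [0,0,0,1,1,1,0,0], [0,0,0,1,1,1,1,0], [0,0,0,1,1,1,1,1], [0,1,0,1,0,0,0,0],
    [0,1,0,1,1,0,0,0], [0,1,0,1,1,1,0,0], [0,1,0,1,1,1,1,0], [0,1,0,1,1,1,1,1],
    [0,0,1,1,0,0,0,0], [0,0,1,1,1,0,0,0], [0,0,1,1,1,1,0,0], [0,0,1,1,1,1,1,0],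
    [0,0,1,1,1,1,1,1], [1,0,1,1,0,0,0,0], [1,0,1,1,1,0,0,0], [1,0,1,1,1,1,0,0],
    [1,0,1,1,1,1,1,0], [1,0,1,1,1,1,1,1], [0,1,1,1,0,0,0,0], [0,1,1,1,1,0,0,0],
    [0,1,1,1,1,1,0,0], [0,1,1,1,1,1,1,0], [0,1,1,1,1,1,1,1], [1,1,1,1,0,0,0,0],
    [1,1,1,1,1,0,0,0], [1,1,1,1,1,1,0,0], [1,1,1,1,1,1,1,0], [1,1,1,1,1,1,1,1],
    [0,1,1,2,1,0,0,0], [0,1,1,2,1,1,0,0], [0,1,1,2,1,1,1,0], [0,1,1,2,1,1,1,1],
    [0,1,1,2,2,1,0,0], [0,1,1,2,2,1,1,0], [0,1,1,2,2,1,1,1], [0,1,1,2,2,2,1,0],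
    [0,1,1,2,2,2,1,1], [0,1,1,2,2,2,2,1], [1,1,1,2,1,0,0,0], [1,1,1,2,1,1,0,0],
    [1,1,1,2,1,1,1,0], [1,1,1,2,1,1,1,1], [1,1,1,2,2,1,0,0], [1,1,1,2,2,1,1,0],
    [1,1,1,2,2,1,1,1], [1,1,1,2,2,2,1,0], [1,1,1,2,2,2,1,1], [1,1,1,2,2,2,2,1],
    [1,1,2,2,1,0,0,0], [1,1,2,2,1,1,0,0], [1,1,2,2,1,1,1,0], [1,1,2,2,1,1,1,1],
    [1,1,2,2,2,1,0,0], [1,1,2,2,2,1,1,0], [1,1,2,2,2,1,1,1], [1,1,2,2,2,2,1,0],
    [1,1,2,2,2,2,1,1], [1,1,2,2,2,2,2,1], [1,1,2,3,2,1,0,0], [1,1,2,3,2,1,1,0],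
    [1,1,2,3,2,1,1,1], [1,1,2,3,2,2,1,0], [1,1,2,3,2,2,1,1], [1,1,2,3,2,2,2,1],
    [1,1,2,3,3,2,1,0], [1,1,2,3,3,2,1,1], [1,1,2,3,3,2,2,1], [1,1,2,3,3,3,2,1],
    [1,2,2,3,2,1,0,0], [1,2,2,3,2,1,1,0], [1,2,2,3,2,1,1,1], [1,2,2,3,2,2,1,0],
    [1,2,2,3,2,2,1,1], [1,2,2,3,2,2,2,1], [1,2,2,3,3,2,1,0], [1,2,2,3,3,2,1,1],
    [1,2,2,3,3,2,2,1], [1,2,2,3,3,3,2,1], [1,2,2,4,3,2,1,0], [1,2,2,4,3,2,1,1],
    [1,2,2,4,3,2,2,1], [1,2,2,4,3,3,2,1], [1,2,2,4,4,3,2,1], [1,2,3,4,3,2,1,0],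
    [1,2,3,4,3,2,1,1], [1,2,3,4,3,2,2,1], [1,2,3,4,3,3,2,1], [1,2,3,4,4,3,2,1],
    [2,2,3,4,3,2,1,0], [2,2,3,4,3,2,1,1], [2,2,3,4,3,2,2,1], [2,2,3,4,3,3,2,1],
    [2,2,3,4,4,3,2,1], [1,2,3,5,4,3,2,1], [2,2,3,5,4,3,2,1], [1,3,3,5,4,3,2,1],
    [2,3,3,5,4,3,2,1], [2,2,4,5,4,3,2,1], [2,3,4,5,4,3,2,1], [2,3,4,6,4,3,2,1],
    [2,3,4,6,5,3,2,1], [2,3,4,6,5,4,2,1], [2,3,4,6,5,4,3,1], [2,3,4,6,5,4,3,2]]"

lemma root_candidates_eq: "root_candidates = root_list"
  unfolding root_candidates_def root_list_def window_def by code_simp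

lemma mem_concat_map: "y \<in> set ys \<Longrightarrow> x \<in> set (f y) \<Longrightarrow> x \<in> set (concat (map f ys))"
  by auto

lemma mem_if_Nil: "P \<Longrightarrow> x \<in> set ys \<Longrightarrow> x \<in> set (if P then ys else [])"
  by simp

lemma roots_in_root_list:
  assumes "a \<in> roots"
  shows "a \<in> set root_list"
proof -
  have "length a = 8" and "norm60 a = 120"
    using assms by (simp_all add: roots_iff_norm60)
  then obtain a0 a1 a2 a3 a4 a5 a6 a7 where a: "a = [a0, a1, a2, a3, a4, a5, a6, a7]"
    and norm: "2*a3^2 + 10*(3*a2-2*a3)^2 + 30*(2*a1-a3)^2 + 30*(2*a0-a2)^2
      + 3*(5*a4-4*a3)^2 + 5*(4*a5-3*a4)^2 + 10*(3*a6-2*a5)^2 + 30*(2*a7-a6)^2 = 120"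
    using list8_eq unfolding norm60_def by (metis nth_Cons_0 nth_Cons_numeral numeral_One)
  have sq: "0 \<le> a3^2" "0 \<le> (3*a2-2*a3)^2" "0 \<le> (2*a1-a3)^2" "0 \<le> (2*a0-a2)^2"
    "0 \<le> (5*a4-4*a3)^2" "0 \<le> (4*a5-3*a4)^2" "0 \<le> (3*a6-2*a5)^2" "0 \<le> (2*a7-a6)^2"
    by simp_all
  \<comment> \<open>Each weighted square is at most 120, which confines every coordinate to a window.\<close>
  have "\<bar>a3\<bar> \<le> 7"
    by (intro abs_le_if_square_less; simp; use norm sq in linarith)
  then have w3: "a3 \<in> set [-7..7]"
    by (subst set_upto) auto
  have w2: "a2 \<in> set (window 3 (2*a3) 3)"
    by (intro mem_window abs_le_if_square_less; simp; use norm sq in linarith)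
  have w1: "a1 \<in> set (window 2 a3 2)"
    by (intro mem_window abs_le_if_square_less; simp; use norm sq in linarith)
  have w0: "a0 \<in> set (window 2 a2 2)"
    by (intro mem_window abs_le_if_square_less; simp; use norm sq in linarith)
  have w4: "a4 \<in> set (window 5 (4*a3) 6)"
    by (intro mem_window abs_le_if_square_less; simp; use norm sq in linarith)
  have w5: "a5 \<in> set (window 4 (3*a4) 4)"
    by (intro mem_window abs_le_if_square_less; simp; use norm sq in linarith)
  have w6: "a6 \<in> set (window 3 (2*a5) 3)"
    by (intro mem_window abs_le_if_square_less; simp; use norm sq in linarith)
  have w7: "a7 \<in> set (window 2 a6 2)"
    by (intro mem_window abs_le_if_square_less; simp; use norm sq in linarith)
  show ?thesis
    unfolding a root_candidates_eq[symmetric] root_candidates_def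
    by (rule mem_concat_map[OF w3] mem_concat_map[OF w2] mem_concat_map[OF w1]
        mem_concat_map[OF w0] mem_concat_map[OF w4] mem_concat_map[OF w5]
        mem_concat_map[OF w6] mem_concat_map[OF w7] mem_if_Nil | use norm sq in linarith)+ simp
qed

lemma root_list_sound: "list_all (\<lambda>a. length a = 8 \<and> norm60 a = 120) root_list"
  unfolding root_list_def norm60_def by code_simp

lemma roots_eq: "roots = set root_list"
proof (intro set_eqI iffI)
  fix a
  show "a \<in> roots \<Longrightarrow> a \<in> set root_list"
    by (rule roots_in_root_list)
  show "a \<in> set root_list \<Longrightarrow> a \<in> roots"
    using root_list_sound unfolding list_all_iff roots_iff_norm60 by blast
qed

lemma finite_roots: "finite roots"
  by (simp add: roots_eq)

section \<open>The root sets of q and n and their cardinalities\<close>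

definition nonneg :: "int list \<Rightarrow> bool" where
  "nonneg a \<longleftrightarrow> list_all (\<lambda>t. 0 \<le> t) a"

definition nonpos :: "int list \<Rightarrow> bool" where
  "nonpos a \<longleftrightarrow> list_all (\<lambda>t. t \<le> 0) a"

lemma all_less8: "(\<forall>i<(8::nat). P i) \<longleftrightarrow> P 0 \<and> P 1 \<and> P 2 \<and> P 3 \<and> P 4 \<and> P 5 \<and> P 6 \<and> P 7"
proof -
  have "{..<8::nat} = {0, 1, 2, 3, 4, 5, 6, 7}"
    by auto
  then show ?thesis
    by (metis (no_types) lessThan_iff insert_iff empty_iff)
qed

lemma posroots_eq: "posroots = {a \<in> roots. nonneg a}"
  by (auto simp: posroots_def nonneg_def roots_def list_all_length)

lemma negroots_eq: "negroots = {a \<in> roots. nonpos a}"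
  by (auto simp: negroots_def nonpos_def roots_def list_all_length)

lemma rootsub_S8: "rootsub S8 = {a \<in> roots. a!7 = 0}"
  unfolding rootsub_def all_less8 S8_def by auto

lemma rootsub_T8: "rootsub T8 = {a \<in> roots. a!3 = 0 \<and> a!4 = 0}"
  unfolding rootsub_def all_less8 T8_def by auto

lemma rootsub_S8_T8: "rootsub (S8 \<inter> T8) = {a \<in> roots. a!3 = 0 \<and> a!4 = 0 \<and> a!7 = 0}"
  unfolding rootsub_def all_less8 S8_def T8_def by auto

definition q_cond :: "int list \<Rightarrow> bool" where
  "q_cond b \<longleftrightarrow> (b!7 = 0 \<or> nonpos b) \<and> ((b!3 = 0 \<and> b!4 = 0) \<or> nonneg b)"

definition q_list :: "int list list" where
  "q_list = filter q_cond root_list"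

definition n_plus_list :: "int list list" where
  "n_plus_list = filter (\<lambda>a. a!7 = 0 \<and> nonneg a \<and> \<not> (a!3 = 0 \<and> a!4 = 0)) root_list"

definition n_minus_list :: "int list list" where
  "n_minus_list = filter (\<lambda>a. a!3 = 0 \<and> a!4 = 0 \<and> nonpos a \<and> a!7 \<noteq> 0) root_list"

definition n_list :: "int list list" where
  "n_list = n_plus_list @ n_minus_list"

lemma q_roots_eq: "(rootsub S8 \<union> negroots) \<inter> (rootsub T8 \<union> posroots) = set q_list"
  unfolding rootsub_S8 rootsub_T8 negroots_eq posroots_eq q_list_def q_cond_def roots_eq by auto

lemma RplusST_eq: "RplusST S8 T8 = set n_plus_list"
  unfolding RplusST_def rootsub_S8 rootsub_S8_T8 posroots_eq n_plus_list_def roots_eq by auto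

lemma RminusST_eq: "RminusST S8 T8 = set n_minus_list"
  unfolding RminusST_def rootsub_T8 rootsub_S8_T8 negroots_eq n_minus_list_def roots_eq by auto

lemma seaweed_root_counts:
  "length (remdups q_list) = 73 \<and> length (remdups n_plus_list) = 56
    \<and> length (remdups n_minus_list) = 3"
  unfolding q_list_def n_plus_list_def n_minus_list_def q_cond_def nonneg_def nonpos_def
    root_list_def
  by code_simp

lemma seaweed_dimensions:
  "card ((rootsub S8 \<union> negroots) \<inter> (rootsub T8 \<union> posroots)) + 8 = 81
    \<and> card (RplusST S8 T8) = 56 \<and> card (RminusST S8 T8) = 3"
  using seaweed_root_counts
  unfolding q_roots_eq RplusST_eq RminusST_eq length_remdups_card_conv by simp

section \<open>Root coordinates of brackets [x, z] with x in n\<close>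

lemma finite_basis: "finite basis"
  unfolding basis_def using finite_roots by simp

lemma nST_eq: "nST S8 T8 = rspan (set n_list)"
  unfolding nST_def n_list_def RplusST_eq RminusST_eq by simp

lemma n_coord_zero:
  assumes "x \<in> nST S8 T8" and "c \<notin> Er ` set n_list"
  shows "x c = 0"
proof (cases "c \<in> basis")
  case True
  then show ?thesis
    using assms unfolding nST_eq rspan_def hspan_def basis_def by auto
next
  case False
  then show ?thesis
    using assms unfolding nST_eq rspan_def hspan_def gE8_def by auto
qed

lemma n_list_roots: "set n_list \<subseteq> roots"
  unfolding n_list_def n_plus_list_def n_minus_list_def roots_eq by auto

lemma lbr_n_left:
  assumes "x \<in> nST S8 T8"
  shows "lbr x z c = (\<Sum>a\<in>set n_list. x (Er a) * (\<Sum>b\<in>basis. z b * bb (Er a) b c))"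
proof -
  have sub: "Er ` set n_list \<subseteq> basis"
    using n_list_roots unfolding basis_def by auto
  have "lbr x z c = (\<Sum>a\<in>Er ` set n_list. \<Sum>b\<in>basis. x a * z b * bb a b c)"
    unfolding lbr_def
    by (rule sum.mono_neutral_right[OF finite_basis sub]) (use n_coord_zero[OF assms] in auto)
  also have "\<dots> = (\<Sum>a\<in>set n_list. x (Er a) * (\<Sum>b\<in>basis. z b * bb (Er a) b c))"
    by (simp add: sum.reindex inj_on_def sum_distrib_left mult.assoc)
  finally show ?thesis .
qed

definition rsub :: "int list \<Rightarrow> int list \<Rightarrow> int list" where
  "rsub r a = map2 (-) r a"

lemma radd_eq_iff_rsub:
  assumes "length a = 8" "length b = 8" "length r = 8"
  shows "radd a b = r \<longleftrightarrow> b = rsub r a"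
  using assms unfolding radd_def rsub_def by (auto simp: list_eq_iff_nth_eq)

lemma radd_rneg: "length a = 8 \<Longrightarrow> radd a (rneg a) = replicate 8 0"
  unfolding radd_def rneg_def by (auto simp: list_eq_iff_nth_eq)

lemma zero_not_root: "replicate 8 0 \<notin> roots"
  by (simp add: roots_iff_norm60 norm60_def)

lemma bb_root_root:
  assumes "a \<in> roots" "b \<in> roots" "r \<in> roots"
  shows "bb (Er a) (Er b) (Er r) = (if b = rsub r a then of_int (eps a b) else 0)"
proof -
  have len: "length a = 8" "length b = 8" "length r = 8"
    using assms by (auto simp: roots_def)
  have "b = rneg a \<Longrightarrow> b \<noteq> rsub r a"
    using radd_rneg[OF len(1)] zero_not_root assms(3) radd_eq_iff_rsub[OF len] by auto
  then show ?thesis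
    using radd_eq_iff_rsub[OF len] assms(3) by auto
qed

lemma bracket_basis_sum:
  assumes "a \<in> roots" "r \<in> roots"
  shows "(\<Sum>b\<in>basis. z b * bb (Er a) b (Er r)) =
    (if a = r then - (\<Sum>i<8. z (Hc i) * of_int (pair i r)) else 0) +
    (if rsub r a \<in> roots then z (Er (rsub r a)) * of_int (eps a (rsub r a)) else 0)"
proof -
  have disj: "Hc ` {..<8} \<inter> Er ` roots = {}"
    by auto
  have "(\<Sum>b\<in>basis. z b * bb (Er a) b (Er r)) =
      (\<Sum>i<8. z (Hc i) * bb (Er a) (Hc i) (Er r)) + (\<Sum>b\<in>roots. z (Er b) * bb (Er a) (Er b) (Er r))"
    unfolding basis_def using finite_roots disj
    by (simp add: sum.union_disjoint sum.reindex inj_on_def)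
  also have "(\<Sum>i<8. z (Hc i) * bb (Er a) (Hc i) (Er r)) =
      (if a = r then - (\<Sum>i<8. z (Hc i) * of_int (pair i r)) else 0)"
    by (auto simp: sum_negf)
  also have "(\<Sum>b\<in>roots. z (Er b) * bb (Er a) (Er b) (Er r)) =
      (\<Sum>b\<in>roots. if b = rsub r a then z (Er b) * of_int (eps a b) else 0)"
  proof (rule sum.cong[OF refl])
    fix b
    assume "b \<in> roots"
    show "z (Er b) * bb (Er a) (Er b) (Er r) =
        (if b = rsub r a then z (Er b) * of_int (eps a b) else 0)"
      unfolding bb_root_root[OF assms(1) \<open>b \<in> roots\<close> assms(2)] by simp
  qed
  also have "\<dots> = (if rsub r a \<in> roots then z (Er (rsub r a)) * of_int (eps a (rsub r a)) else 0)"
    by (simp add: sum.delta finite_roots)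
  finally show ?thesis .
qed

definition supported_in_q :: "(idx \<Rightarrow> 'k::field) \<Rightarrow> bool" where
  "supported_in_q z \<longleftrightarrow> (\<forall>b. b \<notin> set q_list \<longrightarrow> z (Er b) = 0)"

definition q_member :: "int list \<Rightarrow> bool" where
  "q_member b \<longleftrightarrow> length b = 8 \<and> norm60 b = 120 \<and> q_cond b"

lemma q_member_iff: "q_member b \<longleftrightarrow> b \<in> set q_list"
proof -
  have "b \<in> set q_list \<longleftrightarrow> b \<in> roots \<and> q_cond b"
    unfolding q_list_def roots_eq by simp
  then show ?thesis
    unfolding q_member_def roots_iff_norm60 by simp
qed

lemma q_list_roots: "set q_list \<subseteq> roots"
  unfolding q_list_def roots_eq by auto

text \<open>The bilinear form whose parity is the sign cocycle eps.\<close>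

definition cocycle :: "int list \<Rightarrow> int list \<Rightarrow> int" where
  "cocycle a b = a!0*b!0 + a!1*b!1 + a!2*b!2 + a!3*b!3 + a!4*b!4 + a!5*b!5 + a!6*b!6 + a!7*b!7
     + a!0*b!2 + a!1*b!3 + a!2*b!3 + a!3*b!4 + a!4*b!5 + a!5*b!6 + a!6*b!7"

lemma eps_eq_cocycle: "eps a b = (if even (cocycle a b) then 1 else -1)"
proof -
  have "(\<Sum>i<8. \<Sum>j<8. if i = j \<or> (i < j \<and> cartan i j = -1) then a!i * b!j else 0) = cocycle a b"
    by (simp add: cocycle_def numeral_eq_Suc lessThan_Suc cartan_def e8_edges_def)
  then show ?thesis
    unfolding eps_def by (simp add: even_iff_mod_2_eq_zero)
qed

definition bracket_terms :: "int list list \<Rightarrow> int list \<Rightarrow> (int list \<times> int list \<times> int) list" where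
  "bracket_terms ns r = map (\<lambda>a. (a, rsub r a, if even (cocycle a (rsub r a)) then 1 else -1))
     (filter (\<lambda>a. q_member (rsub r a)) ns)"

lemma sum_if_eq_sum_list_filter:
  assumes "distinct xs"
  shows "(\<Sum>a\<in>set xs. if P a then g a else 0) = (\<Sum>a\<leftarrow>filter P xs. g a)"
proof -
  have "(\<Sum>a\<in>set xs. if P a then g a else 0) = (\<Sum>a\<in>set (filter P xs). g a)"
    by (simp add: sum.inter_filter)
  also have "\<dots> = (\<Sum>a\<leftarrow>filter P xs. g a)"
    using assms by (simp add: sum_list_distinct_conv_sum_set)
  finally show ?thesis .
qed

lemma distinct_n_list: "distinct n_list"
  unfolding n_list_def n_plus_list_def n_minus_list_def nonneg_def nonpos_def root_list_def
  by code_simp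

lemma lbr_root_coord:
  assumes "x \<in> nST S8 T8" "r \<in> roots" "supported_in_q z"
  shows "lbr x z (Er r) =
    (if r \<in> set n_list then - (x (Er r) * (\<Sum>i<8. z (Hc i) * of_int (pair i r))) else 0)
    + (\<Sum>(a, b, e)\<leftarrow>bracket_terms n_list r. x (Er a) * (z (Er b) * of_int e))"
proof -
  have q: "(if rsub r a \<in> roots then z (Er (rsub r a)) * c else 0) =
      (if q_member (rsub r a) then z (Er (rsub r a)) * c else 0)" for a c
    using assms(3) q_list_roots by (auto simp: q_member_iff supported_in_q_def)
  have "lbr x z (Er r) = (\<Sum>a\<in>set n_list.
      (if a = r then - (x (Er a) * (\<Sum>i<8. z (Hc i) * of_int (pair i r))) else 0) +
      (if q_member (rsub r a) then x (Er a) * (z (Er (rsub r a)) * of_int (eps a (rsub r a))) else 0))"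
    unfolding lbr_n_left[OF assms(1)]
  proof (rule sum.cong[OF refl])
    fix a
    assume "a \<in> set n_list"
    then have "a \<in> roots"
      using n_list_roots by auto
    then show "x (Er a) * (\<Sum>b\<in>basis. z b * bb (Er a) b (Er r)) =
      (if a = r then - (x (Er a) * (\<Sum>i<8. z (Hc i) * of_int (pair i r))) else 0) +
      (if q_member (rsub r a) then x (Er a) * (z (Er (rsub r a)) * of_int (eps a (rsub r a))) else 0)"
      unfolding bracket_basis_sum[OF \<open>a \<in> roots\<close> assms(2)] q by (simp add: distrib_left)
  qed
  also have "\<dots> = (\<Sum>a\<in>set n_list.
        if a = r then - (x (Er a) * (\<Sum>i<8. z (Hc i) * of_int (pair i r))) else 0) +
      (\<Sum>a\<in>set n_list.
        if q_member (rsub r a) then x (Er a) * (z (Er (rsub r a)) * of_int (eps a (rsub r a))) else 0)"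
    by (rule sum.distrib)
  also have "(\<Sum>a\<in>set n_list.
        if a = r then - (x (Er a) * (\<Sum>i<8. z (Hc i) * of_int (pair i r))) else 0) =
      (if r \<in> set n_list then - (x (Er r) * (\<Sum>i<8. z (Hc i) * of_int (pair i r))) else 0)"
    by (rule sum.delta[OF finite_set])
  also have "(\<Sum>a\<in>set n_list.
        if q_member (rsub r a) then x (Er a) * (z (Er (rsub r a)) * of_int (eps a (rsub r a))) else 0) =
      (\<Sum>a\<leftarrow>filter (\<lambda>a. q_member (rsub r a)) n_list.
        x (Er a) * (z (Er (rsub r a)) * of_int (eps a (rsub r a))))"
    by (rule sum_if_eq_sum_list_filter[OF distinct_n_list])
  also have "(\<Sum>a\<leftarrow>filter (\<lambda>a. q_member (rsub r a)) n_list.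
          x (Er a) * (z (Er (rsub r a)) * of_int (eps a (rsub r a))))
      = (\<Sum>(a, b, e)\<leftarrow>bracket_terms n_list r. x (Er a) * (z (Er b) * of_int e))"
    unfolding bracket_terms_def by (simp add: comp_def eps_eq_cocycle)
  finally show ?thesis .
qed

lemma lbr_add_right: "lbr x (\<lambda>c. y c + z c) d = lbr x y d + lbr x z d"
  unfolding lbr_def by (simp add: distrib_left distrib_right sum.distrib)

lemma lbr_scale_right: "lbr x (\<lambda>c. a * y c) d = a * lbr x y d"
  unfolding lbr_def by (simp add: sum_distrib_left mult_ac)

section \<open>The local subsystem: 30 target roots and 31 source coordinates\<close>

definition local_targets :: "int list list" where
  "local_targets = filter (\<lambda>r. r!3 \<le> 1 \<and> r!4 \<le> 1) n_list"

definition cartan_row :: "int list \<Rightarrow> int list" where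
  "cartan_row r = [2*r!0 - r!2, 2*r!1 - r!3, 2*r!2 - r!0 - r!3, 2*r!3 - r!1 - r!2 - r!4,
     2*r!4 - r!3 - r!5, 2*r!5 - r!4 - r!6, 2*r!6 - r!5 - r!7, 2*r!7 - r!6]"

lemma cartan_row_eq: "cartan_row r = map (\<lambda>i. pair i r) [0..<8]"
  by (simp add: cartan_row_def pair_def numeral_eq_Suc lessThan_Suc upt_conv_Cons cartan_def
      e8_edges_def)

lemma cartan_row_nth: "i < 8 \<Longrightarrow> cartan_row r ! i = pair i r"
  by (simp add: cartan_row_eq)

definition local_table :: "(int list \<times> (int list \<times> int list \<times> int) list \<times> int list) list" where
  "local_table = [
    ([0,0,0,0,1,0,0,0],
       [([0,0,0,0,1,1,0,0], [0,0,0,0,0,-1,0,0], 1), ([0,0,0,0,1,1,1,0], [0,0,0,0,0,-1,-1,0], 1)],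
       [0,0,0,-1,2,-1,0,0]),
    ([0,0,0,0,1,1,0,0],
       [([0,0,0,0,1,0,0,0], [0,0,0,0,0,1,0,0], -1), ([0,0,0,0,1,1,1,0], [0,0,0,0,0,0,-1,0], 1)],
       [0,0,0,-1,1,1,-1,0]),
    ([0,0,0,0,1,1,1,0],
       [([0,0,0,0,1,0,0,0], [0,0,0,0,0,1,1,0], -1), ([0,0,0,0,1,1,0,0], [0,0,0,0,0,0,1,0], -1)],
       [0,0,0,-1,1,0,1,-1]),
    ([0,0,0,1,0,0,0,0],
       [([0,1,0,1,0,0,0,0], [0,-1,0,0,0,0,0,0], -1), ([0,0,1,1,0,0,0,0], [0,0,-1,0,0,0,0,0], -1),
        ([1,0,1,1,0,0,0,0], [-1,0,-1,0,0,0,0,0], -1)],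
       [0,-1,-1,2,-1,0,0,0]),
    ([0,0,0,1,1,0,0,0],
       [([0,0,0,0,1,0,0,0], [0,0,0,1,0,0,0,0], 1), ([0,0,0,1,0,0,0,0], [0,0,0,0,1,0,0,0], -1),
        ([0,0,0,1,1,1,0,0], [0,0,0,0,0,-1,0,0], 1), ([0,0,0,1,1,1,1,0], [0,0,0,0,0,-1,-1,0], 1),
        ([0,1,0,1,1,0,0,0], [0,-1,0,0,0,0,0,0], -1), ([0,0,1,1,1,0,0,0], [0,0,-1,0,0,0,0,0], -1),
        ([1,0,1,1,1,0,0,0], [-1,0,-1,0,0,0,0,0], -1)],
       [0,-1,-1,1,1,-1,0,0]),
    ([0,0,0,1,1,1,0,0],
       [([0,0,0,0,1,1,0,0], [0,0,0,1,0,0,0,0], 1), ([0,0,0,1,0,0,0,0], [0,0,0,0,1,1,0,0], -1),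
        ([0,0,0,1,1,0,0,0], [0,0,0,0,0,1,0,0], -1), ([0,0,0,1,1,1,1,0], [0,0,0,0,0,0,-1,0], 1),
        ([0,1,0,1,1,1,0,0], [0,-1,0,0,0,0,0,0], -1), ([0,0,1,1,1,1,0,0], [0,0,-1,0,0,0,0,0], -1),
        ([1,0,1,1,1,1,0,0], [-1,0,-1,0,0,0,0,0], -1)],
       [0,-1,-1,1,0,1,-1,0]),
    ([0,0,0,1,1,1,1,0],
       [([0,0,0,0,1,1,1,0], [0,0,0,1,0,0,0,0], 1), ([0,0,0,1,0,0,0,0], [0,0,0,0,1,1,1,0], -1),
        ([0,0,0,1,1,0,0,0], [0,0,0,0,0,1,1,0], -1), ([0,0,0,1,1,1,0,0], [0,0,0,0,0,0,1,0], -1),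
        ([0,1,0,1,1,1,1,0], [0,-1,0,0,0,0,0,0], -1), ([0,0,1,1,1,1,1,0], [0,0,-1,0,0,0,0,0], -1),
        ([1,0,1,1,1,1,1,0], [-1,0,-1,0,0,0,0,0], -1)],
       [0,-1,-1,1,0,0,1,-1]),
    ([0,1,0,1,0,0,0,0],
       [([0,0,0,1,0,0,0,0], [0,1,0,0,0,0,0,0], 1), ([0,1,1,1,0,0,0,0], [0,0,-1,0,0,0,0,0], -1),
        ([1,1,1,1,0,0,0,0], [-1,0,-1,0,0,0,0,0], -1)],
       [0,1,-1,1,-1,0,0,0]),
    ([0,1,0,1,1,0,0,0],
       [([0,0,0,0,1,0,0,0], [0,1,0,1,0,0,0,0], 1), ([0,0,0,1,1,0,0,0], [0,1,0,0,0,0,0,0], 1),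
        ([0,1,0,1,0,0,0,0], [0,0,0,0,1,0,0,0], -1), ([0,1,0,1,1,1,0,0], [0,0,0,0,0,-1,0,0], 1),
        ([0,1,0,1,1,1,1,0], [0,0,0,0,0,-1,-1,0], 1), ([0,1,1,1,1,0,0,0], [0,0,-1,0,0,0,0,0], -1),
        ([1,1,1,1,1,0,0,0], [-1,0,-1,0,0,0,0,0], -1)],
       [0,1,-1,0,1,-1,0,0]),
    ([0,1,0,1,1,1,0,0],
       [([0,0,0,0,1,1,0,0], [0,1,0,1,0,0,0,0], 1), ([0,0,0,1,1,1,0,0], [0,1,0,0,0,0,0,0], 1),
        ([0,1,0,1,0,0,0,0], [0,0,0,0,1,1,0,0], -1), ([0,1,0,1,1,0,0,0], [0,0,0,0,0,1,0,0], -1),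
        ([0,1,0,1,1,1,1,0], [0,0,0,0,0,0,-1,0], 1), ([0,1,1,1,1,1,0,0], [0,0,-1,0,0,0,0,0], -1),
        ([1,1,1,1,1,1,0,0], [-1,0,-1,0,0,0,0,0], -1)],
       [0,1,-1,0,0,1,-1,0]),
    ([0,1,0,1,1,1,1,0],
       [([0,0,0,0,1,1,1,0], [0,1,0,1,0,0,0,0], 1), ([0,0,0,1,1,1,1,0], [0,1,0,0,0,0,0,0], 1),
        ([0,1,0,1,0,0,0,0], [0,0,0,0,1,1,1,0], -1), ([0,1,0,1,1,0,0,0], [0,0,0,0,0,1,1,0], -1),
        ([0,1,0,1,1,1,0,0], [0,0,0,0,0,0,1,0], -1), ([0,1,1,1,1,1,1,0], [0,0,-1,0,0,0,0,0], -1),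
        ([1,1,1,1,1,1,1,0], [-1,0,-1,0,0,0,0,0], -1)],
       [0,1,-1,0,0,0,1,-1]),
    ([0,0,1,1,0,0,0,0],
       [([0,0,0,1,0,0,0,0], [0,0,1,0,0,0,0,0], 1), ([1,0,1,1,0,0,0,0], [-1,0,0,0,0,0,0,0], -1),
        ([0,1,1,1,0,0,0,0], [0,-1,0,0,0,0,0,0], -1)],
       [-1,-1,1,1,-1,0,0,0]),
    ([0,0,1,1,1,0,0,0],
       [([0,0,0,0,1,0,0,0], [0,0,1,1,0,0,0,0], 1), ([0,0,0,1,1,0,0,0], [0,0,1,0,0,0,0,0], 1),
        ([0,0,1,1,0,0,0,0], [0,0,0,0,1,0,0,0], -1), ([0,0,1,1,1,1,0,0], [0,0,0,0,0,-1,0,0], 1),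
        ([0,0,1,1,1,1,1,0], [0,0,0,0,0,-1,-1,0], 1), ([1,0,1,1,1,0,0,0], [-1,0,0,0,0,0,0,0], -1),
        ([0,1,1,1,1,0,0,0], [0,-1,0,0,0,0,0,0], -1)],
       [-1,-1,1,0,1,-1,0,0]),
    ([0,0,1,1,1,1,0,0],
       [([0,0,0,0,1,1,0,0], [0,0,1,1,0,0,0,0], 1), ([0,0,0,1,1,1,0,0], [0,0,1,0,0,0,0,0], 1),
        ([0,0,1,1,0,0,0,0], [0,0,0,0,1,1,0,0], -1), ([0,0,1,1,1,0,0,0], [0,0,0,0,0,1,0,0], -1),
        ([0,0,1,1,1,1,1,0], [0,0,0,0,0,0,-1,0], 1), ([1,0,1,1,1,1,0,0], [-1,0,0,0,0,0,0,0], -1),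
        ([0,1,1,1,1,1,0,0], [0,-1,0,0,0,0,0,0], -1)],
       [-1,-1,1,0,0,1,-1,0]),
    ([0,0,1,1,1,1,1,0],
       [([0,0,0,0,1,1,1,0], [0,0,1,1,0,0,0,0], 1), ([0,0,0,1,1,1,1,0], [0,0,1,0,0,0,0,0], 1),
        ([0,0,1,1,0,0,0,0], [0,0,0,0,1,1,1,0], -1), ([0,0,1,1,1,0,0,0], [0,0,0,0,0,1,1,0], -1),
        ([0,0,1,1,1,1,0,0], [0,0,0,0,0,0,1,0], -1), ([1,0,1,1,1,1,1,0], [-1,0,0,0,0,0,0,0], -1),
        ([0,1,1,1,1,1,1,0], [0,-1,0,0,0,0,0,0], -1)],
       [-1,-1,1,0,0,0,1,-1]),
    ([1,0,1,1,0,0,0,0],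
       [([0,0,0,1,0,0,0,0], [1,0,1,0,0,0,0,0], 1), ([0,0,1,1,0,0,0,0], [1,0,0,0,0,0,0,0], 1),
        ([1,1,1,1,0,0,0,0], [0,-1,0,0,0,0,0,0], -1)],
       [1,-1,0,1,-1,0,0,0]),
    ([1,0,1,1,1,0,0,0],
       [([0,0,0,0,1,0,0,0], [1,0,1,1,0,0,0,0], 1), ([0,0,0,1,1,0,0,0], [1,0,1,0,0,0,0,0], 1),
        ([0,0,1,1,1,0,0,0], [1,0,0,0,0,0,0,0], 1), ([1,0,1,1,0,0,0,0], [0,0,0,0,1,0,0,0], -1),
        ([1,0,1,1,1,1,0,0], [0,0,0,0,0,-1,0,0], 1), ([1,0,1,1,1,1,1,0], [0,0,0,0,0,-1,-1,0], 1),
        ([1,1,1,1,1,0,0,0], [0,-1,0,0,0,0,0,0], -1)],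
       [1,-1,0,0,1,-1,0,0]),
    ([1,0,1,1,1,1,0,0],
       [([0,0,0,0,1,1,0,0], [1,0,1,1,0,0,0,0], 1), ([0,0,0,1,1,1,0,0], [1,0,1,0,0,0,0,0], 1),
        ([0,0,1,1,1,1,0,0], [1,0,0,0,0,0,0,0], 1), ([1,0,1,1,0,0,0,0], [0,0,0,0,1,1,0,0], -1),
        ([1,0,1,1,1,0,0,0], [0,0,0,0,0,1,0,0], -1), ([1,0,1,1,1,1,1,0], [0,0,0,0,0,0,-1,0], 1),
        ([1,1,1,1,1,1,0,0], [0,-1,0,0,0,0,0,0], -1)],
       [1,-1,0,0,0,1,-1,0]),
    ([1,0,1,1,1,1,1,0],
       [([0,0,0,0,1,1,1,0], [1,0,1,1,0,0,0,0], 1), ([0,0,0,1,1,1,1,0], [1,0,1,0,0,0,0,0], 1),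
        ([0,0,1,1,1,1,1,0], [1,0,0,0,0,0,0,0], 1), ([1,0,1,1,0,0,0,0], [0,0,0,0,1,1,1,0], -1),
        ([1,0,1,1,1,0,0,0], [0,0,0,0,0,1,1,0], -1), ([1,0,1,1,1,1,0,0], [0,0,0,0,0,0,1,0], -1),
        ([1,1,1,1,1,1,1,0], [0,-1,0,0,0,0,0,0], -1)],
       [1,-1,0,0,0,0,1,-1]),
    ([0,1,1,1,0,0,0,0],
       [([0,1,0,1,0,0,0,0], [0,0,1,0,0,0,0,0], 1), ([0,0,1,1,0,0,0,0], [0,1,0,0,0,0,0,0], 1),
        ([1,1,1,1,0,0,0,0], [-1,0,0,0,0,0,0,0], -1)],
       [-1,1,1,0,-1,0,0,0]),
    ([0,1,1,1,1,0,0,0],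
       [([0,0,0,0,1,0,0,0], [0,1,1,1,0,0,0,0], 1), ([0,1,0,1,1,0,0,0], [0,0,1,0,0,0,0,0], 1),
        ([0,0,1,1,1,0,0,0], [0,1,0,0,0,0,0,0], 1), ([0,1,1,1,0,0,0,0], [0,0,0,0,1,0,0,0], -1),
        ([0,1,1,1,1,1,0,0], [0,0,0,0,0,-1,0,0], 1), ([0,1,1,1,1,1,1,0], [0,0,0,0,0,-1,-1,0], 1),
        ([1,1,1,1,1,0,0,0], [-1,0,0,0,0,0,0,0], -1)],
       [-1,1,1,-1,1,-1,0,0]),
    ([0,1,1,1,1,1,0,0],
       [([0,0,0,0,1,1,0,0], [0,1,1,1,0,0,0,0], 1), ([0,1,0,1,1,1,0,0], [0,0,1,0,0,0,0,0], 1),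
        ([0,0,1,1,1,1,0,0], [0,1,0,0,0,0,0,0], 1), ([0,1,1,1,0,0,0,0], [0,0,0,0,1,1,0,0], -1),
        ([0,1,1,1,1,0,0,0], [0,0,0,0,0,1,0,0], -1), ([0,1,1,1,1,1,1,0], [0,0,0,0,0,0,-1,0], 1),
        ([1,1,1,1,1,1,0,0], [-1,0,0,0,0,0,0,0], -1)],
       [-1,1,1,-1,0,1,-1,0]),
    ([0,1,1,1,1,1,1,0],
       [([0,0,0,0,1,1,1,0], [0,1,1,1,0,0,0,0], 1), ([0,1,0,1,1,1,1,0], [0,0,1,0,0,0,0,0], 1),
        ([0,0,1,1,1,1,1,0], [0,1,0,0,0,0,0,0], 1), ([0,1,1,1,0,0,0,0], [0,0,0,0,1,1,1,0], -1),
        ([0,1,1,1,1,0,0,0], [0,0,0,0,0,1,1,0], -1), ([0,1,1,1,1,1,0,0], [0,0,0,0,0,0,1,0], -1),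
        ([1,1,1,1,1,1,1,0], [-1,0,0,0,0,0,0,0], -1)],
       [-1,1,1,-1,0,0,1,-1]),
    ([1,1,1,1,0,0,0,0],
       [([0,1,0,1,0,0,0,0], [1,0,1,0,0,0,0,0], 1), ([1,0,1,1,0,0,0,0], [0,1,0,0,0,0,0,0], 1),
        ([0,1,1,1,0,0,0,0], [1,0,0,0,0,0,0,0], 1)],
       [1,1,0,0,-1,0,0,0]),
    ([1,1,1,1,1,0,0,0],
       [([0,0,0,0,1,0,0,0], [1,1,1,1,0,0,0,0], 1), ([0,1,0,1,1,0,0,0], [1,0,1,0,0,0,0,0], 1),
        ([1,0,1,1,1,0,0,0], [0,1,0,0,0,0,0,0], 1), ([0,1,1,1,1,0,0,0], [1,0,0,0,0,0,0,0], 1),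
        ([1,1,1,1,0,0,0,0], [0,0,0,0,1,0,0,0], -1), ([1,1,1,1,1,1,0,0], [0,0,0,0,0,-1,0,0], 1),
        ([1,1,1,1,1,1,1,0], [0,0,0,0,0,-1,-1,0], 1)],
       [1,1,0,-1,1,-1,0,0]),
    ([1,1,1,1,1,1,0,0],
       [([0,0,0,0,1,1,0,0], [1,1,1,1,0,0,0,0], 1), ([0,1,0,1,1,1,0,0], [1,0,1,0,0,0,0,0], 1),
        ([1,0,1,1,1,1,0,0], [0,1,0,0,0,0,0,0], 1), ([0,1,1,1,1,1,0,0], [1,0,0,0,0,0,0,0], 1),
        ([1,1,1,1,0,0,0,0], [0,0,0,0,1,1,0,0], -1), ([1,1,1,1,1,0,0,0], [0,0,0,0,0,1,0,0], -1),
        ([1,1,1,1,1,1,1,0], [0,0,0,0,0,0,-1,0], 1)],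
       [1,1,0,-1,0,1,-1,0]),
    ([1,1,1,1,1,1,1,0],
       [([0,0,0,0,1,1,1,0], [1,1,1,1,0,0,0,0], 1), ([0,1,0,1,1,1,1,0], [1,0,1,0,0,0,0,0], 1),
        ([1,0,1,1,1,1,1,0], [0,1,0,0,0,0,0,0], 1), ([0,1,1,1,1,1,1,0], [1,0,0,0,0,0,0,0], 1),
        ([1,1,1,1,0,0,0,0], [0,0,0,0,1,1,1,0], -1), ([1,1,1,1,1,0,0,0], [0,0,0,0,0,1,1,0], -1),
        ([1,1,1,1,1,1,0,0], [0,0,0,0,0,0,1,0], -1)],
       [1,1,0,-1,0,0,1,-1]),
    ([0,0,0,0,0,-1,-1,-1],
       [([0,0,0,0,0,0,-1,-1], [0,0,0,0,0,-1,0,0], 1), ([0,0,0,0,0,0,0,-1], [0,0,0,0,0,-1,-1,0], 1)],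
       [0,0,0,0,1,-1,0,-1]),
    ([0,0,0,0,0,0,-1,-1],
       [([0,0,0,0,0,-1,-1,-1], [0,0,0,0,0,1,0,0], -1), ([0,0,0,0,0,0,0,-1], [0,0,0,0,0,0,-1,0], 1)],
       [0,0,0,0,0,1,-1,-1]),
    ([0,0,0,0,0,0,0,-1],
       [([0,0,0,0,0,-1,-1,-1], [0,0,0,0,0,1,1,0], -1), ([0,0,0,0,0,0,-1,-1], [0,0,0,0,0,0,1,0], -1)],
       [0,0,0,0,0,0,1,-2])]"

definition local_data :: "int list list \<Rightarrow> int list list \<Rightarrow>
    (int list \<times> (int list \<times> int list \<times> int) list \<times> int list) list" where
  "local_data ns ts = map (\<lambda>r. (r, bracket_terms ns r, cartan_row r)) ts"

text \<open>The table is certified by evaluation; the root lists are arguments of local_data, so that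
  they are computed only once.\<close>

lemma local_table_eq: "local_data n_list local_targets = local_table"
  unfolding local_table_def by code_simp

definition bracket_expr :: "(idx \<Rightarrow> 'k::field) \<Rightarrow> (idx \<Rightarrow> 'k) \<Rightarrow>
    int list \<times> (int list \<times> int list \<times> int) list \<times> int list \<Rightarrow> 'k" where
  "bracket_expr x z = (\<lambda>(r, T, P). - (x (Er r) * (\<Sum>i\<leftarrow>[0..<8]. z (Hc i) * of_int (P ! i)))
     + (\<Sum>(a, b, e)\<leftarrow>T. x (Er a) * (z (Er b) * of_int e)))"

lemma local_bracket:
  assumes "x \<in> nST S8 T8" "supported_in_q z"
  shows "map (\<lambda>r. lbr x z (Er r)) local_targets = map (bracket_expr x z) local_table"
proof -
  have "lbr x z (Er r) = bracket_expr x z (r, bracket_terms n_list r, cartan_row r)"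
    if "r \<in> set local_targets" for r
  proof -
    have "r \<in> set n_list"
      using that by (simp add: local_targets_def)
    moreover have "(\<Sum>i<8. z (Hc i) * of_int (pair i r)) =
        (\<Sum>i\<leftarrow>[0..<8]. z (Hc i) * of_int (cartan_row r ! i))"
      by (simp add: cartan_row_nth interv_sum_list_conv_sum_set_nat atLeast0LessThan)
    ultimately show ?thesis
      using n_list_roots lbr_root_coord[OF assms(1) _ assms(2)] by (auto simp: bracket_expr_def)
  qed
  then have "map (\<lambda>r. lbr x z (Er r)) local_targets
      = map (bracket_expr x z) (local_data n_list local_targets)"
    by (simp add: local_data_def)
  then show ?thesis
    unfolding local_table_eq .
qed

lemma local_targets_eq: "local_targets = map fst local_table"
  using arg_cong[OF local_table_eq, of "map fst"] by (simp add: local_data_def comp_def)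

lemma length_local_targets: "length local_targets = 30"
  by (simp add: local_targets_eq local_table_def)

lemma local_targets_in_n: "set local_targets \<subseteq> set n_list"
  by (auto simp: local_targets_def)

lemma distinct_local_targets: "distinct local_targets"
  using distinct_n_list by (simp add: local_targets_def)

lemma local_targets_in_roots: "set local_targets \<subseteq> roots"
  using local_targets_in_n n_list_roots by blast

text \<open>The roots of q met by the table: the Levi roots of q and the degree-one roots of n.\<close>

definition local_sources :: "int list list" where
  "local_sources = filter (\<lambda>b. b!7 = 0 \<and> b!3 + b!4 \<le> 1) q_list"

text \<open>The 31 coordinates of q on which the local target coordinates of [x, z] depend.\<close>

definition local_coords :: "idx list" where
  "local_coords = map Hc [0..<8] @ map Er local_sources"

lemma local_sources_distinct: "length local_sources = 23 \<and> distinct local_sources"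
  unfolding local_sources_def q_list_def q_cond_def nonneg_def nonpos_def root_list_def
  by code_simp

lemma local_table_sources:
  "list_all (\<lambda>(r, T, P). list_all (\<lambda>(a, b, e). b \<in> set local_sources) T) local_table"
  unfolding local_sources_def q_list_def q_cond_def nonneg_def nonpos_def root_list_def
    local_table_def
  by code_simp

lemma length_local_coords: "length local_coords = 31"
  using local_sources_distinct by (simp add: local_coords_def)

lemma distinct_local_coords: "distinct local_coords"
  using local_sources_distinct by (auto simp: local_coords_def distinct_map inj_on_def)

lemma Hc_in_local_coords: "i < 8 \<Longrightarrow> Hc i \<in> set local_coords"
  by (simp add: local_coords_def)

lemma Er_in_local_coords: "Er b \<in> set local_coords \<longleftrightarrow> b \<in> set local_sources"
  by (auto simp: local_coords_def)

lemma local_sources_in_q: "set local_sources \<subseteq> set q_list"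
  by (auto simp: local_sources_def)

lemma local_support_imp_supported:
  assumes "\<forall>c. c \<notin> set local_coords \<longrightarrow> z c = 0"
  shows "supported_in_q z"
  using assms local_sources_in_q Er_in_local_coords unfolding supported_in_q_def by blast

lemma bracket_depends_on_local_coords:
  assumes "x \<in> nST S8 T8" "supported_in_q z1" "supported_in_q z2"
    and agree: "\<forall>c\<in>set local_coords. z1 c = z2 c" and r: "r \<in> set local_targets"
  shows "lbr x z1 (Er r) = lbr x z2 (Er r)"
proof -
  have "bracket_expr x z1 d = bracket_expr x z2 d" if "d \<in> set local_table" for d
  proof -
    obtain r' T P where d: "d = (r', T, P)"
      by (cases d) auto
    have "\<forall>(a, b, e)\<in>set T. b \<in> set local_sources"
      using local_table_sources that d by (auto simp: list_all_iff)
    then have "(\<Sum>(a, b, e)\<leftarrow>T. x (Er a) * (z1 (Er b) * of_int e)) =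
        (\<Sum>(a, b, e)\<leftarrow>T. x (Er a) * (z2 (Er b) * of_int e))"
      using agree Er_in_local_coords by (intro arg_cong[where f=sum_list] map_cong) auto
    moreover have "(\<Sum>i\<leftarrow>[0..<8]. z1 (Hc i) * of_int (P ! i)) =
        (\<Sum>i\<leftarrow>[0..<8]. z2 (Hc i) * of_int (P ! i))"
      using agree Hc_in_local_coords by (intro arg_cong[where f=sum_list] map_cong) auto
    ultimately show ?thesis
      by (simp add: d bracket_expr_def)
  qed
  then have "map (\<lambda>r. lbr x z1 (Er r)) local_targets = map (\<lambda>r. lbr x z2 (Er r)) local_targets"
    unfolding local_bracket[OF assms(1,2)] local_bracket[OF assms(1,3)] by simp
  then show ?thesis
    using r by (simp add: map_eq_conv)
qed

lemma bracket_at_alpha5: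
  assumes "x \<in> nST S8 T8" "supported_in_q y"
    and "x (Er [0,0,0,0,1,0,0,0]) = 0" "x (Er [0,0,0,0,1,1,0,0]) = 0" "x (Er [0,0,0,0,1,1,1,0]) = 0"
  shows "lbr x y (Er [0,0,0,0,1,0,0,0]) = 0"
proof -
  have "local_targets ! 0 = [0,0,0,0,1,0,0,0]"
    by (simp add: local_targets_eq local_table_def)
  then have "lbr x y (Er [0,0,0,0,1,0,0,0]) = map (bracket_expr x y) local_table ! 0"
    using local_bracket[OF assms(1,2)] length_local_targets
    by (metis nth_map zero_less_numeral)
  then show ?thesis
    using assms(3-5) by (simp add: local_table_def bracket_expr_def)
qed

section \<open>Two kernel vectors\<close>

definition degree_one_part :: "(idx \<Rightarrow> 'k::field) \<Rightarrow> idx \<Rightarrow> 'k" where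
  "degree_one_part x c = (case c of Hc i \<Rightarrow> 0 | Er b \<Rightarrow> if b!3 + b!4 = 1 then x (Er b) else 0)"

lemma degree_one_n_local: "list_all (\<lambda>b. b!3 + b!4 = 1 \<longrightarrow> b \<in> set local_sources) n_list"
  unfolding n_list_def n_plus_list_def n_minus_list_def local_sources_def q_list_def q_cond_def
    nonneg_def nonpos_def root_list_def
  by code_simp

lemma degree_one_part_local:
  assumes "x \<in> nST S8 T8"
  shows "\<forall>c. c \<notin> set local_coords \<longrightarrow> degree_one_part x c = 0"
proof (intro allI impI)
  fix c
  assume c: "c \<notin> set local_coords"
  show "degree_one_part x c = 0"
  proof (cases c)
    case (Er b)
    then have "b \<notin> set n_list \<or> b!3 + b!4 \<noteq> 1"
      using c degree_one_n_local Er_in_local_coords by (auto simp: list_all_iff)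
    then show ?thesis
      using n_coord_zero[OF assms, of "Er b"] Er by (auto simp: degree_one_part_def)
  qed (simp add: degree_one_part_def)
qed

lemma degree_one_part_supported:
  "x \<in> nST S8 T8 \<Longrightarrow> supported_in_q (degree_one_part x)"
  by (rule local_support_imp_supported[OF degree_one_part_local])

lemma bracket_degree_one_part:
  assumes "x \<in> nST S8 T8"
  shows "\<forall>r\<in>set local_targets. lbr x (degree_one_part x) (Er r) = 0"
proof -
  have "list_all (\<lambda>v. v = 0) (map (\<lambda>r. lbr x (degree_one_part x) (Er r)) local_targets)"
    unfolding local_bracket[OF assms degree_one_part_supported[OF assms]]
    by (simp add: local_table_def bracket_expr_def degree_one_part_def algebra_simps)
  then show ?thesis
    by (simp add: list_all_iff)
qed

definition alpha5_form :: "(idx \<Rightarrow> 'k::field) \<Rightarrow> 'k \<Rightarrow> 'k \<Rightarrow> 'k \<Rightarrow> 'k" where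
  "alpha5_form x c1 c2 c3 =
    c1 * x (Er [0,0,0,0,1,0,0,0]) + c2 * x (Er [0,0,0,0,1,1,0,0]) + c3 * x (Er [0,0,0,0,1,1,1,0])"

definition alpha8_form :: "(idx \<Rightarrow> 'k::field) \<Rightarrow> 'k \<Rightarrow> 'k \<Rightarrow> 'k \<Rightarrow> 'k" where
  "alpha8_form x c1 c2 c3 =
    c1 * x (Er [0,0,0,0,0,-1,-1,-1]) + c2 * x (Er [0,0,0,0,0,0,-1,-1]) + c3 * x (Er [0,0,0,0,0,0,0,-1])"

text \<open>The Levi witness: the rank-one matrix w c^T, placed in the gl_3 spanned by h_6, h_7 and the
  root vectors at +-alpha_6, +-alpha_7, +-(alpha_6 + alpha_7), plus, at each root b of q with
  coefficients (1, 0) at (alpha_4, alpha_5), the pairing of c with the components of x at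
  b + alpha_5, b + alpha_5 + alpha_6, b + alpha_5 + alpha_6 + alpha_7.\<close>

definition levi_witness :: "(idx \<Rightarrow> 'k::field) \<Rightarrow> 'k \<Rightarrow> 'k \<Rightarrow> 'k \<Rightarrow> idx \<Rightarrow> 'k" where
  "levi_witness x c1 c2 c3 c = (let
      w1 = x (Er [0,0,0,0,1,0,0,0]); w2 = x (Er [0,0,0,0,1,1,0,0]); w3 = x (Er [0,0,0,0,1,1,1,0]) in
    case c of
      Hc i \<Rightarrow> (if i = 5 then - (w1 * c1) else if i = 6 then w3 * c3 else 0)
    | Er b \<Rightarrow>
        (if b = [0,0,0,0,0,1,0,0] then w2 * c1
         else if b = [0,0,0,0,0,0,1,0] then w3 * c2
         else if b = [0,0,0,0,0,1,1,0] then w3 * c1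
         else if b = [0,0,0,0,0,-1,0,0] then - (w1 * c2)
         else if b = [0,0,0,0,0,0,-1,0] then - (w2 * c3)
         else if b = [0,0,0,0,0,-1,-1,0] then - (w1 * c3)
         else if q_member b \<and> b!3 = 1 \<and> b!4 = 0 then
           c1 * x (Er (radd b [0,0,0,0,1,0,0,0])) + c2 * x (Er (radd b [0,0,0,0,1,1,0,0]))
             + c3 * x (Er (radd b [0,0,0,0,1,1,1,0]))
         else 0))"

lemma levi_roots_local: "list_all (\<lambda>b. b \<in> set local_sources) [[0,0,0,0,0,1,0,0], [0,0,0,0,0,0,1,0],
    [0,0,0,0,0,1,1,0], [0,0,0,0,0,-1,0,0], [0,0,0,0,0,0,-1,0], [0,0,0,0,0,-1,-1,0]]"
  unfolding local_sources_def q_list_def q_cond_def nonneg_def nonpos_def root_list_def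
  by code_simp

lemma degree_10_root_local:
  assumes "q_member b" "b!3 = 1" "b!4 = 0"
  shows "b \<in> set local_sources"
proof -
  have "b \<in> set q_list" "length b = 8" "q_cond b"
    using assms(1) by (auto simp: q_member_iff[symmetric] q_member_def)
  moreover have "\<not> nonpos b"
    using \<open>length b = 8\<close> assms(2) by (auto simp: nonpos_def list_all_length intro!: exI[of _ 3])
  ultimately show ?thesis
    using assms(2,3) by (auto simp: local_sources_def q_cond_def)
qed

lemma levi_witness_local: "\<forall>c. c \<notin> set local_coords \<longrightarrow> levi_witness x c1 c2 c3 c = 0"
  using levi_roots_local degree_10_root_local Hc_in_local_coords
  by (auto simp: levi_witness_def Let_def Er_in_local_coords split: idx.splits)

lemma levi_witness_supported: "supported_in_q (levi_witness x c1 c2 c3)"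
  by (rule local_support_imp_supported[OF levi_witness_local])

lemma bracket_levi_witness:
  fixes x :: "idx \<Rightarrow> 'k::field" and c1 c2 c3 :: 'k
  assumes "x \<in> nST S8 T8"
  defines "W \<equiv> alpha5_form x c1 c2 c3" and "M \<equiv> alpha8_form x c1 c2 c3"
  shows "map (\<lambda>r. lbr x (levi_witness x c1 c2 c3) (Er r)) local_targets =
    [- x (Er [0,0,0,0,1,0,0,0]) * W, 0, - x (Er [0,0,0,0,1,1,1,0]) * W,
     0, 0, x (Er [0,0,0,1,1,1,0,0]) * W, 0,
     0, 0, x (Er [0,1,0,1,1,1,0,0]) * W, 0,
     0, 0, x (Er [0,0,1,1,1,1,0,0]) * W, 0,
     0, 0, x (Er [1,0,1,1,1,1,0,0]) * W, 0,
     0, 0, x (Er [0,1,1,1,1,1,0,0]) * W, 0,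
     0, 0, x (Er [1,1,1,1,1,1,0,0]) * W, 0,
     - x (Er [0,0,0,0,1,0,0,0]) * M,
     x (Er [0,0,0,0,0,0,-1,-1]) * W - x (Er [0,0,0,0,1,1,0,0]) * M,
     - x (Er [0,0,0,0,1,1,1,0]) * M]"
  unfolding local_bracket[OF assms(1) levi_witness_supported] W_def M_def alpha5_form_def
    alpha8_form_def
  by (simp add: local_table_def bracket_expr_def levi_witness_def q_member_def norm60_def q_cond_def
      nonneg_def nonpos_def radd_def upt_conv_Cons algebra_simps)

lemma levi_witness_kernel:
  fixes x :: "idx \<Rightarrow> 'k::field" and c1 c2 c3 :: 'k
  assumes "x \<in> nST S8 T8"
    and "alpha5_form x c1 c2 c3 = 0" "alpha8_form x c1 c2 c3 = 0"
  shows "\<forall>r\<in>set local_targets. lbr x (levi_witness x c1 c2 c3) (Er r) = 0"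
proof -
  have "list_all (\<lambda>v. v = 0) (map (\<lambda>r. lbr x (levi_witness x c1 c2 c3) (Er r)) local_targets)"
    unfolding bracket_levi_witness[OF assms(1)] assms(2,3) by simp
  then show ?thesis
    by (simp add: list_all_iff)
qed

text \<open>If w and c are nonzero and c.w = 0, the Levi witness has a nonzero local coordinate where the
  degree-one part of x vanishes (the rank-one matrix w c^T is nonzero and traceless).\<close>

lemma levi_witness_detects:
  fixes x :: "idx \<Rightarrow> 'k::field" and c1 c2 c3 :: 'k
  defines "w1 \<equiv> x (Er [0,0,0,0,1,0,0,0])" and "w2 \<equiv> x (Er [0,0,0,0,1,1,0,0])"
    and "w3 \<equiv> x (Er [0,0,0,0,1,1,1,0])"
  assumes w: "\<not> (w1 = 0 \<and> w2 = 0 \<and> w3 = 0)" and c: "\<not> (c1 = 0 \<and> c2 = 0 \<and> c3 = 0)"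
    and pairing: "alpha5_form x c1 c2 c3 = 0"
  shows "\<exists>d\<in>set local_coords. degree_one_part x d = 0 \<and> levi_witness x c1 c2 c3 d \<noteq> 0"
proof (rule ccontr)
  have trace: "c1 * w1 + c2 * w2 + c3 * w3 = 0"
    using pairing by (simp add: alpha5_form_def w1_def w2_def w3_def)
  assume "\<not> ?thesis"
  then have vanish: "levi_witness x c1 c2 c3 d = 0"
    if "d \<in> set local_coords" "degree_one_part x d = 0" for d
    using that by blast
  have products: "w1 * c1 = 0" "w3 * c3 = 0" "w2 * c1 = 0" "w3 * c2 = 0" "w3 * c1 = 0"
    "w1 * c2 = 0" "w2 * c3 = 0" "w1 * c3 = 0"
    using vanish[of "Hc 5"] vanish[of "Hc 6"] levi_roots_local Hc_in_local_coords
      vanish[of "Er [0,0,0,0,0,1,0,0]"] vanish[of "Er [0,0,0,0,0,0,1,0]"]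
      vanish[of "Er [0,0,0,0,0,1,1,0]"] vanish[of "Er [0,0,0,0,0,-1,0,0]"]
      vanish[of "Er [0,0,0,0,0,0,-1,0]"] vanish[of "Er [0,0,0,0,0,-1,-1,0]"]
    by (simp_all add: levi_witness_def degree_one_part_def Er_in_local_coords w1_def w2_def w3_def)
  have "w2 * c2 = (c1 * w1 + c2 * w2 + c3 * w3) - w1 * c1 - w3 * c3"
    by (simp add: algebra_simps)
  then have "w2 * c2 = 0"
    using trace products by simp
  then show False
    using products w c by auto
qed

section \<open>The local bracket map on coordinate vectors\<close>

text \<open>Positions of the 31 local coordinates; positions below 30 also index the local targets.\<close>

typedef local_pos = "{..<31::nat}"
  morphisms pos_nat pos_of_nat
  by (rule exI[of _ 0]) simp

instance local_pos :: finite
proof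
  have "(UNIV :: local_pos set) = pos_of_nat ` {..<31}"
    by (metis type_definition.Abs_image type_definition_local_pos)
  then show "finite (UNIV :: local_pos set)"
    by (metis finite_lessThan finite_imageI)
qed

lemma pos_nat_less: "pos_nat j < 31"
  using pos_nat by auto

lemma pos_nat_of_nat: "k < 31 \<Longrightarrow> pos_nat (pos_of_nat k) = k"
  by (simp add: pos_of_nat_inverse)

definition coords_of :: "(idx \<Rightarrow> 'k::field) \<Rightarrow> 'k^local_pos" where
  "coords_of y = (\<chi> j. y (local_coords ! pos_nat j))"

definition from_coords :: "'k::field^local_pos \<Rightarrow> idx \<Rightarrow> 'k" where
  "from_coords v c = (\<Sum>j\<in>UNIV. if local_coords ! pos_nat j = c then v $ j else 0)"

lemma from_coords_at_local:
  assumes "k < 31"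
  shows "from_coords v (local_coords ! k) = v $ pos_of_nat k"
proof -
  have "local_coords ! pos_nat j = local_coords ! k \<longleftrightarrow> j = pos_of_nat k" for j
    using nth_eq_iff_index_eq[OF distinct_local_coords] pos_nat_less[of j] assms length_local_coords
    by (metis pos_nat_inverse pos_nat_of_nat)
  then show ?thesis
    unfolding from_coords_def by simp
qed

lemma from_coords_outside: "c \<notin> set local_coords \<Longrightarrow> from_coords v c = 0"
  unfolding from_coords_def using pos_nat_less length_local_coords by (auto intro!: sum.neutral)

lemma from_coords_coords_of_agree:
  assumes "c \<in> set local_coords"
  shows "from_coords (coords_of y) c = y c"
proof -
  obtain k where "k < 31" "c = local_coords ! k"
    using assms length_local_coords by (metis in_set_conv_nth)
  then show ?thesis
    by (simp add: from_coords_at_local coords_of_def pos_nat_of_nat)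
qed

lemma from_coords_coords_of:
  assumes "\<forall>c. c \<notin> set local_coords \<longrightarrow> y c = 0"
  shows "from_coords (coords_of y) = y"
  using assms from_coords_coords_of_agree from_coords_outside by (metis ext)

lemma from_coords_zero: "from_coords (0 :: 'k::field^local_pos) = (\<lambda>c. 0)"
  unfolding from_coords_def by (auto intro!: sum.neutral)

lemma from_coords_add: "from_coords (v + w) = (\<lambda>c. from_coords v c + from_coords w c)"
  unfolding from_coords_def by (auto simp: sum.distrib[symmetric] intro!: sum.cong)

lemma from_coords_scale: "from_coords (a *s v) = (\<lambda>c. a * from_coords v c)"
  unfolding from_coords_def by (auto simp: sum_distrib_left intro!: sum.cong)

lemma from_coords_supported: "supported_in_q (from_coords v)"
  using from_coords_outside by (intro local_support_imp_supported) blast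

text \<open>z maps to the local target coordinates of [x, z]; position 30 is left free.\<close>

definition local_bracket_map :: "(idx \<Rightarrow> 'k::field) \<Rightarrow> 'k^local_pos \<Rightarrow> 'k^local_pos" where
  "local_bracket_map x v =
    (\<chi> j. if pos_nat j < 30 then lbr x (from_coords v) (Er (local_targets ! pos_nat j)) else 0)"

lemma local_bracket_map_linear:
  fixes x :: "idx \<Rightarrow> 'k::field"
  shows "Vector_Spaces.linear (*s) (*s) (local_bracket_map x)"
  unfolding Vector_Spaces.linear_iff
proof (intro conjI allI)
  fix v w :: "'k::field^local_pos" and a :: 'k
  show "local_bracket_map x (v + w) = local_bracket_map x v + local_bracket_map x w"
    unfolding local_bracket_map_def from_coords_add lbr_add_right by (simp add: vec_eq_iff)
  show "local_bracket_map x (a *s v) = a *s local_bracket_map x v"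
    unfolding local_bracket_map_def from_coords_scale lbr_scale_right by (simp add: vec_eq_iff)
qed (rule vec.vector_space_axioms)+

lemma qST_supported: "y \<in> qST S8 T8 \<Longrightarrow> supported_in_q y"
  unfolding qST_def pminus_def pplus_def hspan_def supported_in_q_def gE8_def basis_def
  by (auto simp: q_roots_eq[symmetric])

definition target_vector :: "'k::field^local_pos \<Rightarrow> idx \<Rightarrow> 'k" where
  "target_vector t c = (case c of Hc i \<Rightarrow> 0
     | Er b \<Rightarrow> (\<Sum>k<30. if local_targets ! k = b then t $ pos_of_nat k else 0))"

lemma target_vector_in_n: "target_vector t \<in> nST S8 T8"
proof -
  have zero: "target_vector t (Er b) = 0" if "b \<notin> set local_targets" for b
    unfolding target_vector_def using that length_local_targets by (auto intro!: sum.neutral)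
  show ?thesis
    unfolding nST_eq rspan_def hspan_def gE8_def
  proof (intro CollectI conjI allI impI ballI)
    fix c
    assume "c \<notin> basis"
    then show "target_vector t c = 0"
      using zero local_targets_in_roots by (cases c) (auto simp: basis_def target_vector_def)
  next
    fix a
    assume "a \<in> roots" "a \<notin> set n_list"
    then show "target_vector t (Er a) = 0"
      using zero local_targets_in_n by auto
  qed (simp add: target_vector_def)
qed

lemma target_vector_at:
  assumes "k < 30"
  shows "target_vector t (Er (local_targets ! k)) = t $ pos_of_nat k"
proof -
  have "local_targets ! k' = local_targets ! k \<longleftrightarrow> k' = k" if "k' < 30" for k'
    using nth_eq_iff_index_eq[OF distinct_local_targets] that assms length_local_targets by auto
  then have "(\<Sum>k'<30. if local_targets ! k' = local_targets ! k then t $ pos_of_nat k' else 0)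
      = (\<Sum>k'<30. if k' = k then t $ pos_of_nat k' else 0)"
    by (intro sum.cong) auto
  then show ?thesis
    using assms by (simp add: target_vector_def)
qed

lemma local_bracket_map_onto:
  assumes "x \<in> nST S8 T8" and onto: "lbr x ` qST S8 T8 = nST S8 T8"
    and "t $ pos_of_nat 30 = 0"
  shows "t \<in> range (local_bracket_map x)"
proof -
  obtain y where y: "y \<in> qST S8 T8" "lbr x y = target_vector t"
    using onto target_vector_in_n by (metis imageE)
  have "local_bracket_map x (coords_of y) = t"
  proof (subst vec_eq_iff, intro allI)
    fix j
    show "local_bracket_map x (coords_of y) $ j = t $ j"
    proof (cases "pos_nat j < 30")
      case True
      let ?r = "local_targets ! pos_nat j"
      have "?r \<in> set local_targets"
        using True length_local_targets by simp
      then have "lbr x (from_coords (coords_of y)) (Er ?r) = lbr x y (Er ?r)"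
        using from_coords_coords_of_agree
        by (intro bracket_depends_on_local_coords[OF assms(1) from_coords_supported
            qST_supported[OF y(1)]]) auto
      then show ?thesis
        using True y(2) target_vector_at[OF True]
        by (simp add: local_bracket_map_def pos_nat_inverse)
    next
      case False
      then have "pos_nat j = 30"
        using pos_nat_less[of j] by simp
      then have "j = pos_of_nat 30"
        by (metis pos_nat_inverse)
      then show ?thesis
        using False assms(3) by (simp add: local_bracket_map_def)
    qed
  qed
  then show ?thesis
    by (metis rangeI)
qed

lemma local_bracket_map_kernel:
  assumes "\<forall>c. c \<notin> set local_coords \<longrightarrow> z c = 0"
    and "\<forall>r\<in>set local_targets. lbr x z (Er r) = 0"
  shows "local_bracket_map x (coords_of z) = 0"
  using assms length_local_targets
  unfolding local_bracket_map_def from_coords_coords_of[OF assms(1)] by (simp add: vec_eq_iff)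

section \<open>No Richardson element\<close>

lemma no_richardson_if_w_zero:
  fixes x :: "idx \<Rightarrow> 'k::field"
  assumes x: "x \<in> nST S8 T8" and onto: "lbr x ` qST S8 T8 = nST S8 T8"
    and w: "x (Er [0,0,0,0,1,0,0,0]) = 0" "x (Er [0,0,0,0,1,1,0,0]) = 0"
      "x (Er [0,0,0,0,1,1,1,0]) = 0"
  shows False
proof -
  define t :: "idx \<Rightarrow> 'k" where "t = (\<lambda>c. if c = Er [0,0,0,0,1,0,0,0] then 1 else 0)"
  have "[0,0,0,0,1,0,0,0] \<in> set local_targets"
    by (simp add: local_targets_eq local_table_def)
  then have "t \<in> nST S8 T8"
    using local_targets_in_n n_list_roots
    unfolding nST_eq rspan_def hspan_def gE8_def t_def by (auto simp: basis_def)
  then obtain y where y: "y \<in> qST S8 T8" "lbr x y = t"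
    using onto by (metis imageE)
  then have "lbr x y (Er [0,0,0,0,1,0,0,0]) = 1"
    by (simp add: t_def)
  moreover have "lbr x y (Er [0,0,0,0,1,0,0,0]) = 0"
    by (rule bracket_at_alpha5[OF x qST_supported[OF y(1)] w])
  ultimately show False
    by simp
qed

text \<open>Main case: if the components w of x at alpha_5, alpha_5 + alpha_6, alpha_5 + alpha_6 + alpha_7
  are not all zero, the degree-one part of x and the Levi witness are independent vectors in the
  kernel of the local bracket map, whose image contains a hyperplane.\<close>

lemma no_richardson_if_w_nonzero:
  fixes x :: "idx \<Rightarrow> 'k::field"
  assumes x: "x \<in> nST S8 T8" and onto: "lbr x ` qST S8 T8 = nST S8 T8"
    and w: "\<not> (x (Er [0,0,0,0,1,0,0,0]) = 0 \<and> x (Er [0,0,0,0,1,1,0,0]) = 0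
      \<and> x (Er [0,0,0,0,1,1,1,0]) = 0)"
  shows False
proof -
  obtain c1 c2 c3 :: 'k where c: "\<not> (c1 = 0 \<and> c2 = 0 \<and> c3 = 0)"
    and W: "alpha5_form x c1 c2 c3 = 0" and M: "alpha8_form x c1 c2 c3 = 0"
    using common_annihilator unfolding alpha5_form_def alpha8_form_def by blast
  let ?K1 = "degree_one_part x" and ?K2 = "levi_witness x c1 c2 c3"
  have ker1: "local_bracket_map x (coords_of ?K1) = 0"
    by (rule local_bracket_map_kernel[OF degree_one_part_local[OF x] bracket_degree_one_part[OF x]])
  have ker2: "local_bracket_map x (coords_of ?K2) = 0"
    by (rule local_bracket_map_kernel[OF levi_witness_local levi_witness_kernel[OF x W M]])
  obtain d where d: "d \<in> set local_coords" "?K1 d = 0" "?K2 d \<noteq> 0"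
    using levi_witness_detects[OF w c W] by blast
  then obtain k where k: "k < 31" "d = local_coords ! k"
    using length_local_coords by (metis in_set_conv_nth)
  have "coords_of ?K1 = 0"
  proof (rule kernel_of_map_onto_hyperplane[OF local_bracket_map_linear])
    show "t \<in> range (local_bracket_map x)" if "t $ pos_of_nat 30 = 0" for t
      using local_bracket_map_onto[OF x onto that] .
    show "coords_of ?K2 $ pos_of_nat k \<noteq> 0" "coords_of ?K1 $ pos_of_nat k = 0"
      using d k by (simp_all add: coords_of_def pos_nat_of_nat)
  qed (fact ker2 ker1)+
  then have "?K1 = from_coords 0"
    using from_coords_coords_of[OF degree_one_part_local[OF x]] by simp
  then have "?K1 = (\<lambda>c. 0)"
    by (simp add: from_coords_zero)
  then have "?K1 (Er [0,0,0,0,1,0,0,0]) = 0" "?K1 (Er [0,0,0,0,1,1,0,0]) = 0"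
    "?K1 (Er [0,0,0,0,1,1,1,0]) = 0"
    by simp_all
  then show False
    using w by (simp add: degree_one_part_def)
qed

text \<open>The statement holds over any field.\<close>

lemma no_richardson: "\<not> (\<exists>x :: idx \<Rightarrow> 'k::field. richardson S8 T8 x)"
  using no_richardson_if_w_zero no_richardson_if_w_nonzero unfolding richardson_def by blast

theorem mainTheorem6:
  shows "card ((rootsub S8 \<union> negroots) \<inter> (rootsub T8 \<union> posroots)) + 8 = 81
    \<and> card (RplusST S8 T8) = 56 \<and> card (RminusST S8 T8) = 3
    \<and> \<not> (\<exists>x :: idx \<Rightarrow> 'k :: {alg_closed_field, field_char_0}. richardson S8 T8 x)"
  using seaweed_dimensions no_richardson by blast

end
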